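(* Let $\Psi$ and $\psi$ be as in the context, let $\chi$ be the unique solution with $\int\chi d\pi=0$ and $\chi\in\bigcap_{\beta\in[1,\alpha)}L^\beta(\pi)$ of $\chi-P\chi=\Psi$, and set $Z_{N,1}=N^{-1/\alpha}(\chi(\xi_1)-P\chi(\xi_0))$, $h_p(x)=e^{ipx}-1-ipx$, $\bar h^{(N)}_p=\mathbb Eh_p(Z_{N,1})$, $\psi^{(N)}(p)=-N\bar h^{(N)}_p$. Then there exists $C>0$ such that $$|\psi^{(N)}(p)-\psi(p)|\le\frac{C}{N^{\alpha_1/\alpha}}|p|(1+|p|)\quad\text{for all }p\in\mathbb R,\ N\ge1.$$ Moreover, for any bounded set $\Delta\subset\mathbb R$ and $\beta\in[1,\alpha)$ there exists $C>0$ such that $$N\int\sup_{\lambda\in\Delta}\Big|h_p\Big(\frac{\Psi(v)+\lambda}{N^{1/\alpha}}\Big)\Big|^\beta\pi(dv)\le C|p|^\beta(1+|p|),\qquad\forall p\in\mathbb R,\ N\ge1.$$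
   Context: $(E,d)$ is a Polish space and $\{\xi_n\}_{n\ge0}$ is a Markov chain on $E$ whose initial law $\pi$ is invariant and ergodic, with transition operator $P$, satisfying $\sup\{\|Pf\|_{L^2(\pi)}:\|f\|_{L^2(\pi)}=1,\int fd\pi=0\}<1$ and $P(w,dv)=p(w,v)\pi(dv)$ with $p\in L^\infty(\pi\otimes\pi)$. $\Psi:E\to\mathbb R$ satisfies $\int\Psi d\pi=0$ and there exist $\alpha\in(1,2)$, $\alpha_1\in(0,2-\alpha)$, $c_*^\pm\ge0$ with $c_*^++c_*^->0$ and $C^*>0$ such that $|\pi(\Psi>\lambda)-c_*^+\lambda^{-\alpha}|+|\pi(\Psi<-\lambda)-c_*^-\lambda^{-\alpha}|\le C^*\lambda^{-\alpha-\alpha_1}$ for $\lambda\ge1$. $\psi(p)=\alpha\int_{\mathbb R}(1+i\lambda p-e^{i\lambda p})c_*(\lambda)|\lambda|^{-1-\alpha}d\lambda$ with $c_*(\lambda)=c_*^-$ for $\lambda<0$ and $c_*^+$ for $\lambda>0$. *)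

theory Defs
  imports "HOL-Probability.Probability"
begin

definition trans_op :: "'a measure \<Rightarrow> ('a \<Rightarrow> 'a \<Rightarrow> real) \<Rightarrow> ('a \<Rightarrow> real) \<Rightarrow> 'a \<Rightarrow> real" where
  "trans_op \<pi> p f w = (\<integral>v. p w v * f v \<partial>\<pi>)"

definition trans_prob :: "'a measure \<Rightarrow> ('a \<Rightarrow> 'a \<Rightarrow> real) \<Rightarrow> 'a \<Rightarrow> 'a set \<Rightarrow> real" where
  "trans_prob \<pi> p w B = (\<integral>v. indicator B v * p w v \<partial>\<pi>)"

definition density_kernel :: "'a measure \<Rightarrow> ('a \<Rightarrow> 'a \<Rightarrow> real) \<Rightarrow> bool" where
  "density_kernel \<pi> p \<longleftrightarrow>
     (\<lambda>(w, v). p w v) \<in> borel_measurable (\<pi> \<Otimes>\<^sub>M \<pi>) \<and>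
     (\<forall>w v. 0 \<le> p w v) \<and>
     (\<forall>w \<in> space \<pi>. integrable \<pi> (p w) \<and> (\<integral>v. p w v \<partial>\<pi>) = 1) \<and>
     (\<exists>B. AE x in \<pi> \<Otimes>\<^sub>M \<pi>. case x of (w, v) \<Rightarrow> p w v \<le> B)"

definition invariant_measure :: "'a measure \<Rightarrow> ('a \<Rightarrow> 'a \<Rightarrow> real) \<Rightarrow> bool" where
  "invariant_measure \<pi> p \<longleftrightarrow>
     (\<forall>B \<in> sets \<pi>. (\<integral>w. trans_prob \<pi> p w B \<partial>\<pi>) = measure \<pi> B)"

definition ergodic_measure :: "'a measure \<Rightarrow> ('a \<Rightarrow> 'a \<Rightarrow> real) \<Rightarrow> bool" where
  "ergodic_measure \<pi> p \<longleftrightarrow>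
     (\<forall>A \<in> sets \<pi>. (AE w in \<pi>. trans_prob \<pi> p w A = indicator A w)
         \<longrightarrow> measure \<pi> A = 0 \<or> measure \<pi> A = 1)"

definition spectral_gap :: "'a measure \<Rightarrow> ('a \<Rightarrow> 'a \<Rightarrow> real) \<Rightarrow> bool" where
  "spectral_gap \<pi> p \<longleftrightarrow>
     (SUP f \<in> {f. f \<in> borel_measurable \<pi> \<and> integrable \<pi> (\<lambda>v. (f v)\<^sup>2)
                  \<and> sqrt (\<integral>v. (f v)\<^sup>2 \<partial>\<pi>) = 1 \<and> (\<integral>v. f v \<partial>\<pi>) = 0}.
        sqrt (\<integral>w. (trans_op \<pi> p f w)\<^sup>2 \<partial>\<pi>)) < 1"

text \<open>xi is a Markov chain on (M) with initial law pi and transition kernel p(w,v) pi(dv):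
  the Markov property is stated on the intersection-stable generator of sigma(xi_0..xi_n).\<close>
definition markov_chain :: "'b measure \<Rightarrow> (nat \<Rightarrow> 'b \<Rightarrow> 'a) \<Rightarrow> 'a measure \<Rightarrow> ('a \<Rightarrow> 'a \<Rightarrow> real) \<Rightarrow> bool" where
  "markov_chain M \<xi> \<pi> p \<longleftrightarrow>
     prob_space M \<and>
     (\<forall>n. \<xi> n \<in> M \<rightarrow>\<^sub>M \<pi>) \<and>
     distr M \<pi> (\<xi> 0) = \<pi> \<and>
     (\<forall>n A B. (\<forall>i. A i \<in> sets \<pi>) \<longrightarrow> B \<in> sets \<pi> \<longrightarrow>
        measure M {\<omega> \<in> space M. (\<forall>i\<le>n. \<xi> i \<omega> \<in> A i) \<and> \<xi> (Suc n) \<omega> \<in> B}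
        = (\<integral>\<omega>. indicator {\<omega> \<in> space M. \<forall>i\<le>n. \<xi> i \<omega> \<in> A i} \<omega> * trans_prob \<pi> p (\<xi> n \<omega>) B \<partial>M))"

definition hfun :: "real \<Rightarrow> real \<Rightarrow> complex" where
  "hfun p x = cis (p * x) - 1 - \<i> * complex_of_real (p * x)"

definition cstar :: "real \<Rightarrow> real \<Rightarrow> real \<Rightarrow> real" where
  "cstar cp cm l = (if l < 0 then cm else cp)"

definition psi_exp :: "real \<Rightarrow> real \<Rightarrow> real \<Rightarrow> real \<Rightarrow> complex" where
  "psi_exp \<alpha> cp cm p = complex_of_real \<alpha> *
     (\<integral>l. (1 + \<i> * complex_of_real (l * p) - cis (l * p)) *
          complex_of_real (cstar cp cm l * \<bar>l\<bar> powr (-1 - \<alpha>)) \<partial>lborel)"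

end

theory Submission
  imports Defs
begin

text \<open>
  Write \<open>Z = chi (\<xi> 1) - P chi (\<xi> 0)\<close>. Since \<open>chi - P chi = \<Psi>\<close> and \<open>P chi\<close> is bounded (the
  transition density is), \<open>Z = \<Psi> (\<xi> 1) + O(1)\<close> almost surely, and \<open>\<xi> 1\<close> has law \<open>\<pi>\<close>.
  As \<open>h_q(x + b) - h_q(x) = O(q^2 (b^2 + |b| |x|))\<close>, replacing \<open>Z\<close> by \<open>\<Psi> (\<xi> 1)\<close> changes
  \<open>N E h_q(N^(-1/\<alpha>) Z)\<close> only by \<open>O(q^2 N^(1 - 2/\<alpha>))\<close>, which is \<open>O(q^2 N^(-\<alpha>\<^sub>1/\<alpha>))\<close>.

  For \<open>\<Psi>\<close> itself treat the two half lines separately. By the layer-cake formula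
  \<open>N E h_q(N^(-1/\<alpha>) \<Psi>\<^sup>+) = \<integral>\<^sub>0\<^sup>\<infinity> h_q'(t) N \<pi>(\<Psi> > t N^(1/\<alpha>)) dt\<close>, and the same formula for the
  measure \<open>\<alpha> t^(-1-\<alpha>) dt\<close> on \<open>(0, \<infinity>)\<close> writes the corresponding half of \<open>-\<psi>(q)\<close> with
  \<open>c\<^sub>+ t^(-\<alpha>)\<close> in place of the rescaled tail. The tail hypothesis makes the two integrands differ
  by \<open>O(N^(-\<alpha>\<^sub>1/\<alpha>) t^(-\<alpha>-\<alpha>\<^sub>1))\<close> for \<open>t \<ge> N^(-1/\<alpha>)\<close>, and \<open>|h_q'(t)| \<le> min (q^2 t) (2|q|)\<close>
  makes the error integrable at \<open>0\<close> and at \<open>\<infinity>\<close>.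

  The moment bound follows from \<open>|h_q(x)|^\<beta> \<le> 2^\<beta> min (|q x|^\<beta>) (|q x|^(2\<beta>))\<close>, the tail bound
  \<open>\<pi>(|\<Psi>| > t) \<le> K t^(-\<alpha>)\<close> and one more layer-cake integration.
\<close>

section \<open>Taylor bounds for \<open>h_q\<close>\<close>

definition hfun_deriv :: "real \<Rightarrow> real \<Rightarrow> complex" where
  "hfun_deriv q t = \<i> * complex_of_real q * (cis (q * t) - 1)"

lemma hfun_0 [simp]: "hfun q 0 = 0"
  by (simp add: hfun_def)

lemma hfun_uminus: "hfun q (-x) = hfun (-q) x"
  by (simp add: hfun_def)

lemma hfun_eq_iexp: "hfun q x = iexp (q * x) - 1 - \<i> * complex_of_real (q * x)"
  by (simp add: hfun_def cis_conv_exp)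

lemma hfun_deriv_eq_iexp: "hfun_deriv q t = \<i> * complex_of_real q * (iexp (q * t) - 1)"
  by (simp add: hfun_deriv_def cis_conv_exp)

lemma norm_iexp_minus_1_le: "cmod (iexp y - 1) \<le> \<bar>y\<bar>" "cmod (iexp y - 1) \<le> 2"
  using iexp_approx1[of y 0] iexp_approx2[of y 0] by simp_all

lemma norm_hfun_le: "cmod (hfun q x) \<le> (q * x)\<^sup>2 / 2" "cmod (hfun q x) \<le> 2 * \<bar>q * x\<bar>"
  using iexp_approx1[of "q * x" 1] iexp_approx2[of "q * x" 1]
  by (simp_all add: hfun_eq_iexp diff_diff_eq power2_eq_square)

lemma norm_hfun_deriv_eq: "cmod (hfun_deriv q t) = \<bar>q\<bar> * cmod (iexp (q * t) - 1)"
  by (simp add: hfun_deriv_eq_iexp norm_mult)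

lemma norm_hfun_deriv_le: "cmod (hfun_deriv q t) \<le> q\<^sup>2 * \<bar>t\<bar>" "cmod (hfun_deriv q t) \<le> 2 * \<bar>q\<bar>"
proof -
  have "\<bar>q\<bar> * cmod (iexp (q * t) - 1) \<le> \<bar>q\<bar> * \<bar>q * t\<bar>"
    by (intro mult_left_mono norm_iexp_minus_1_le) auto
  then show "cmod (hfun_deriv q t) \<le> q\<^sup>2 * \<bar>t\<bar>"
    by (simp add: norm_hfun_deriv_eq abs_mult power2_eq_square mult.assoc)
  have "\<bar>q\<bar> * cmod (iexp (q * t) - 1) \<le> \<bar>q\<bar> * 2"
    by (intro mult_left_mono norm_iexp_minus_1_le) auto
  then show "cmod (hfun_deriv q t) \<le> 2 * \<bar>q\<bar>"
    by (simp add: norm_hfun_deriv_eq mult.commute)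
qed

lemma norm_hfun_add_diff_le:
  "cmod (hfun q (x + b) - hfun q x) \<le> (q * b)\<^sup>2 / 2 + \<bar>q * b\<bar> * \<bar>q * x\<bar>"
proof -
  have "hfun q (x + b) - hfun q x = iexp (q * x) * hfun q b + \<i> * complex_of_real (q * b) * (iexp (q * x) - 1)"
    by (simp add: hfun_eq_iexp distrib_left distrib_right exp_add[symmetric] algebra_simps)
  then have "cmod (hfun q (x + b) - hfun q x)
      \<le> cmod (iexp (q * x) * hfun q b) + cmod (\<i> * complex_of_real (q * b) * (iexp (q * x) - 1))"
    by (simp only: norm_triangle_ineq)
  also have "\<dots> = cmod (hfun q b) + \<bar>q * b\<bar> * cmod (iexp (q * x) - 1)"
    by (simp add: norm_mult abs_mult)
  also have "\<dots> \<le> (q * b)\<^sup>2 / 2 + \<bar>q * b\<bar> * \<bar>q * x\<bar>"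
    by (intro add_mono mult_left_mono norm_hfun_le(1) norm_iexp_minus_1_le(1)) auto
  finally show ?thesis .
qed

lemma has_vector_derivative_hfun: "(hfun q has_vector_derivative hfun_deriv q t) (at t)"
proof -
  have "((\<lambda>x. iexp (q * x) - 1 - \<i> * complex_of_real (q * x)) has_vector_derivative
          q *\<^sub>R (\<i> * iexp (q * t)) - 0 - \<i> * complex_of_real q) (at t)"
    by (intro has_vector_derivative_diff has_vector_derivative_const
        vector_diff_chain_at[of "\<lambda>x. q * x" q t iexp, unfolded o_def] has_vector_derivative_iexp)
      (auto intro!: derivative_eq_intros simp: has_vector_derivative_complex_iff)
  moreover have "q *\<^sub>R (\<i> * iexp (q * t)) - 0 - \<i> * complex_of_real q = hfun_deriv q t"
    by (simp add: hfun_deriv_eq_iexp scaleR_conv_of_real algebra_simps)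
  ultimately show ?thesis
    by (simp add: hfun_eq_iexp[abs_def])
qed

lemma continuous_on_hfun_deriv: "continuous_on UNIV (hfun_deriv q)"
  unfolding hfun_deriv_def by (intro continuous_intros)

lemma borel_measurable_hfun [measurable]: "hfun q \<in> borel_measurable borel"
  by (intro borel_measurable_continuous_onI continuous_at_imp_continuous_on ballI
      has_vector_derivative_continuous[OF has_vector_derivative_hfun])

lemma borel_measurable_hfun_deriv [measurable]: "hfun_deriv q \<in> borel_measurable borel"
  using continuous_on_hfun_deriv by (rule borel_measurable_continuous_onI)

lemma nn_integral_powr_atLeastAtMost_0:
  fixes c e k :: real
  assumes "0 \<le> c" "-1 < e" "0 \<le> k"
  shows "(\<integral>\<^sup>+t. ennreal (k * t powr e) * indicator {0..c} t \<partial>lborel) = ennreal (k * (c powr (e + 1) / (e + 1)))"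
proof -
  have unscaled: "(\<integral>\<^sup>+t. ennreal (t powr e) * indicator {0..c} t \<partial>lborel) = ennreal (c powr (e + 1) / (e + 1))"
    using assms by (intro nn_integral_has_integral_lebesgue' has_integral_powr_from_0) auto
  have "(\<integral>\<^sup>+t. ennreal (k * t powr e) * indicator {0..c} t \<partial>lborel)
      = ennreal k * (\<integral>\<^sup>+t. ennreal (t powr e) * indicator {0..c} t \<partial>lborel)"
    using assms by (subst nn_integral_cmult[symmetric]) (auto simp: ennreal_mult mult.assoc)
  also have "\<dots> = ennreal k * ennreal (c powr (e + 1) / (e + 1))"
    by (simp only: unscaled)
  also have "\<dots> = ennreal (k * (c powr (e + 1) / (e + 1)))"
    using assms by (intro ennreal_mult[symmetric]) (auto simp: divide_simps)
  finally show ?thesis .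
qed

lemma nn_integral_powr_atLeast:
  fixes c e k :: real
  assumes "0 < c" "e < -1" "0 \<le> k"
  shows "(\<integral>\<^sup>+t. ennreal (k * t powr e) * indicator {c..} t \<partial>lborel) = ennreal (k * (c powr (e + 1) / (- e - 1)))"
proof -
  have unscaled: "(\<integral>\<^sup>+t. ennreal (t powr e) * indicator {c..} t \<partial>lborel) = ennreal (c powr (e + 1) / (- e - 1))"
    using assms by (intro nn_integral_has_integral_lebesgue' has_integral_powr_to_inf[THEN has_integral_eq_rhs])
      (auto simp: divide_simps algebra_simps)
  have "(\<integral>\<^sup>+t. ennreal (k * t powr e) * indicator {c..} t \<partial>lborel)
      = ennreal k * (\<integral>\<^sup>+t. ennreal (t powr e) * indicator {c..} t \<partial>lborel)"
    using assms by (subst nn_integral_cmult[symmetric]) (auto simp: ennreal_mult mult.assoc)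
  also have "\<dots> = ennreal k * ennreal (c powr (e + 1) / (- e - 1))"
    by (simp only: unscaled)
  also have "\<dots> = ennreal (k * (c powr (e + 1) / (- e - 1)))"
    using assms by (intro ennreal_mult[symmetric]) (auto simp: divide_simps)
  finally show ?thesis .
qed

lemma nn_integral_norm_hfun_deriv_powr_finite:
  assumes "1 < \<alpha>" "\<alpha> < 2"
  shows "(\<integral>\<^sup>+t. ennreal (cmod (hfun_deriv q t) * t powr (-\<alpha>)) * indicator {0<..} t \<partial>lborel) < \<infinity>"
proof -
  have "ennreal (cmod (hfun_deriv q t) * t powr (-\<alpha>)) * indicator {0<..} t
     \<le> ennreal (q\<^sup>2 * t powr (1 - \<alpha>)) * indicator {0..1} t + ennreal (2 * \<bar>q\<bar> * t powr (-\<alpha>)) * indicator {1..} t"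
    for t :: real
  proof (cases "0 < t")
    case t: True
    show ?thesis
    proof (cases "t \<le> 1")
      case True
      have "cmod (hfun_deriv q t) * t powr (-\<alpha>) \<le> q\<^sup>2 * t * t powr (-\<alpha>)"
        using norm_hfun_deriv_le(1)[of q t] t by (intro mult_right_mono) auto
      also have "\<dots> = q\<^sup>2 * t powr (1 - \<alpha>)"
        using t by (simp add: powr_diff powr_minus divide_inverse)
      finally show ?thesis
        using t True by (simp add: add_increasing2 ennreal_leI)
    next
      case False
      have "cmod (hfun_deriv q t) * t powr (-\<alpha>) \<le> 2 * \<bar>q\<bar> * t powr (-\<alpha>)"
        by (intro mult_right_mono norm_hfun_deriv_le) auto
      then show ?thesis
        using t False by (simp add: add_increasing ennreal_leI)
    qed
  qed simp
  then have "(\<integral>\<^sup>+t. ennreal (cmod (hfun_deriv q t) * t powr (-\<alpha>)) * indicator {0<..} t \<partial>lborel)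
     \<le> (\<integral>\<^sup>+t. ennreal (q\<^sup>2 * t powr (1 - \<alpha>)) * indicator {0..1} t \<partial>lborel)
       + (\<integral>\<^sup>+t. ennreal (2 * \<bar>q\<bar> * t powr (-\<alpha>)) * indicator {1..} t \<partial>lborel)"
    by (subst nn_integral_add[symmetric]) (auto intro!: nn_integral_mono)
  also have "\<dots> < \<infinity>"
    using assms by (simp add: nn_integral_powr_atLeastAtMost_0 nn_integral_powr_atLeast)
  finally show ?thesis .
qed

lemma mult_power2_powr_neg_inverse:
  fixes N \<alpha> :: real
  assumes "0 < N"
  shows "N * (N powr (-1/\<alpha>))\<^sup>2 = N powr (1 - 2/\<alpha>)"
proof -
  have "N * (N powr (-1/\<alpha>))\<^sup>2 = N powr 1 * N powr (-1/\<alpha>) * N powr (-1/\<alpha>)"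
    using assms by (simp add: power2_eq_square)
  also have "\<dots> = N powr (1 - 2/\<alpha>)"
    by (simp only: powr_add[symmetric]) (rule arg_cong[where f = "(powr) N"], simp)
  finally show ?thesis .
qed

lemma powr_1_minus_2_div_le:
  fixes N \<alpha> \<alpha>\<^sub>1 :: real
  assumes "1 \<le> N" "0 < \<alpha>" "\<alpha>\<^sub>1 < 2 - \<alpha>"
  shows "N powr (1 - 2 / \<alpha>) \<le> N powr (- \<alpha>\<^sub>1 / \<alpha>)"
proof (rule powr_mono)
  have "(\<alpha> - 2) / \<alpha> \<le> - \<alpha>\<^sub>1 / \<alpha>"
    using assms by (intro divide_right_mono) auto
  then show "1 - 2 / \<alpha> \<le> - \<alpha>\<^sub>1 / \<alpha>"
    using assms by (simp add: diff_divide_distrib)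
qed (use assms in auto)

section \<open>Rescaled tails against the stable tail\<close>

definition tail_error_const :: "real \<Rightarrow> real \<Rightarrow> real \<Rightarrow> real \<Rightarrow> real" where
  "tail_error_const \<alpha> \<alpha>\<^sub>1 c C\<^sub>s = 1/2 + c / (2 - \<alpha>) + C\<^sub>s / (2 - \<alpha> - \<alpha>\<^sub>1) + 2 * C\<^sub>s / (\<alpha> + \<alpha>\<^sub>1 - 1)"

lemma tail_error_const_nonneg:
  "\<lbrakk>1 < \<alpha>; \<alpha> < 2; 0 < \<alpha>\<^sub>1; \<alpha>\<^sub>1 < 2 - \<alpha>; 0 \<le> c; 0 \<le> C\<^sub>s\<rbrakk> \<Longrightarrow> 0 \<le> tail_error_const \<alpha> \<alpha>\<^sub>1 c C\<^sub>s"
  unfolding tail_error_const_def by (intro add_nonneg_nonneg divide_nonneg_pos) auto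

lemma rescaled_tail_error_le:
  fixes N t \<alpha> \<alpha>\<^sub>1 c C\<^sub>s :: real
  assumes "0 < \<alpha>" "0 < N" "0 < t"
    and tail: "\<bar>\<Phi> (t * N powr (1/\<alpha>)) - c * (t * N powr (1/\<alpha>)) powr (-\<alpha>)\<bar>
               \<le> C\<^sub>s * (t * N powr (1/\<alpha>)) powr (-\<alpha> - \<alpha>\<^sub>1)"
  shows "\<bar>N * \<Phi> (t * N powr (1/\<alpha>)) - c * t powr (-\<alpha>)\<bar> \<le> C\<^sub>s * N powr (-\<alpha>\<^sub>1/\<alpha>) * t powr (-\<alpha> - \<alpha>\<^sub>1)"
proof -
  have "N * (t * N powr (1/\<alpha>)) powr (-\<alpha>) = t powr (-\<alpha>)"
    using assms by (simp add: powr_mult powr_powr powr_minus)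
  then have "N * \<Phi> (t * N powr (1/\<alpha>)) - c * t powr (-\<alpha>)
      = N * (\<Phi> (t * N powr (1/\<alpha>)) - c * (t * N powr (1/\<alpha>)) powr (-\<alpha>))"
    by (simp add: algebra_simps)
  then have "\<bar>N * \<Phi> (t * N powr (1/\<alpha>)) - c * t powr (-\<alpha>)\<bar>
      = N * \<bar>\<Phi> (t * N powr (1/\<alpha>)) - c * (t * N powr (1/\<alpha>)) powr (-\<alpha>)\<bar>"
    using \<open>0 < N\<close> by (simp add: abs_mult)
  also have "\<dots> \<le> N * (C\<^sub>s * (t * N powr (1/\<alpha>)) powr (-\<alpha> - \<alpha>\<^sub>1))"
    using assms by (intro mult_left_mono) auto
  also have "\<dots> = C\<^sub>s * N powr (-\<alpha>\<^sub>1/\<alpha>) * t powr (-\<alpha> - \<alpha>\<^sub>1)"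
  proof -
    have "N * (t * N powr (1/\<alpha>)) powr (-\<alpha> - \<alpha>\<^sub>1) = N powr (1 + (-\<alpha> - \<alpha>\<^sub>1) / \<alpha>) * t powr (-\<alpha> - \<alpha>\<^sub>1)"
      using assms by (simp add: powr_mult powr_powr powr_add)
    also have "1 + (-\<alpha> - \<alpha>\<^sub>1) / \<alpha> = -\<alpha>\<^sub>1 / \<alpha>"
      using assms by (simp add: field_simps)
    finally show ?thesis
      by (simp add: mult.left_commute)
  qed
  finally show ?thesis .
qed

lemma norm_hfun_deriv_tail_error_le:
  fixes N t \<alpha> \<alpha>\<^sub>1 c C\<^sub>s :: real
  assumes "1 < \<alpha>" "0 < \<alpha>\<^sub>1" "0 \<le> c" "0 \<le> C\<^sub>s" "1 \<le> N" "0 < t"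
    and \<Phi>: "\<And>l. 0 \<le> \<Phi> l" "\<And>l. \<Phi> l \<le> 1"
    and tail: "\<And>l. 1 \<le> l \<Longrightarrow> \<bar>\<Phi> l - c * l powr (-\<alpha>)\<bar> \<le> C\<^sub>s * l powr (-\<alpha> - \<alpha>\<^sub>1)"
  shows "ennreal (cmod (hfun_deriv q t) * \<bar>N * \<Phi> (t * N powr (1/\<alpha>)) - c * t powr (-\<alpha>)\<bar>)
    \<le> ennreal (q\<^sup>2 * N * t) * indicator {0..N powr (-1/\<alpha>)} t
      + ennreal (q\<^sup>2 * c * t powr (1 - \<alpha>)) * indicator {0..N powr (-1/\<alpha>)} t
      + ennreal (q\<^sup>2 * C\<^sub>s * N powr (-\<alpha>\<^sub>1/\<alpha>) * t powr (1 - \<alpha> - \<alpha>\<^sub>1)) * indicator {0..1} t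
      + ennreal (2 * \<bar>q\<bar> * C\<^sub>s * N powr (-\<alpha>\<^sub>1/\<alpha>) * t powr (-\<alpha> - \<alpha>\<^sub>1)) * indicator {1..} t"
    (is "ennreal (?h * ?e) \<le> ?B1 + ?B2 + ?B3 + ?B4")
proof -
  have h_small: "?h \<le> q\<^sup>2 * t"
    using norm_hfun_deriv_le(1)[of q t] \<open>0 < t\<close> by simp
  show ?thesis
  proof (cases "t \<le> N powr (-1/\<alpha>)")
    case True
    have "?e \<le> N + c * t powr (-\<alpha>)"
      using \<Phi> assms by (intro abs_triangle_ineq4[THEN order_trans] add_mono) (auto simp: abs_mult)
    then have "?h * ?e \<le> q\<^sup>2 * t * (N + c * t powr (-\<alpha>))"
      using h_small \<open>0 < t\<close> by (intro mult_mono) auto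
    also have "\<dots> = q\<^sup>2 * N * t + q\<^sup>2 * c * t powr (1 - \<alpha>)"
      using \<open>0 < t\<close> by (simp add: algebra_simps powr_diff powr_minus divide_inverse)
    finally have "ennreal (?h * ?e) \<le> ?B1 + ?B2"
      using True \<open>0 < t\<close> assms by (simp add: ennreal_plus[symmetric] ennreal_leI del: ennreal_plus)
    then show ?thesis
      by (rule order_trans) (metis add_increasing2 zero_le order_refl)
  next
    case False
    have "1 \<le> t * N powr (1/\<alpha>)"
      using False mult_right_mono[of "N powr (-1/\<alpha>)" t "N powr (1/\<alpha>)"] assms
      by (simp add: powr_add[symmetric])
    then have e: "?e \<le> C\<^sub>s * N powr (-\<alpha>\<^sub>1/\<alpha>) * t powr (-\<alpha> - \<alpha>\<^sub>1)"
      using assms by (intro rescaled_tail_error_le tail) auto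
    show ?thesis
    proof (cases "t \<le> 1")
      case True
      have "?h * ?e \<le> q\<^sup>2 * t * (C\<^sub>s * N powr (-\<alpha>\<^sub>1/\<alpha>) * t powr (-\<alpha> - \<alpha>\<^sub>1))"
        using e h_small \<open>0 < t\<close> by (intro mult_mono) auto
      also have "\<dots> = q\<^sup>2 * C\<^sub>s * N powr (-\<alpha>\<^sub>1/\<alpha>) * (t * t powr (-\<alpha> - \<alpha>\<^sub>1))"
        by (simp add: algebra_simps)
      also have "t * t powr (-\<alpha> - \<alpha>\<^sub>1) = t powr (1 + (-\<alpha> - \<alpha>\<^sub>1))"
        using \<open>0 < t\<close> by (simp add: powr_add)
      also have "1 + (-\<alpha> - \<alpha>\<^sub>1) = 1 - \<alpha> - \<alpha>\<^sub>1"
        by simp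
      finally have "ennreal (?h * ?e) \<le> ?B3"
        using True \<open>0 < t\<close> by (simp add: ennreal_leI)
      then show ?thesis
        by (rule order_trans) (metis add_increasing add_increasing2 zero_le order_refl)
    next
      case False
      have "?h * ?e \<le> 2 * \<bar>q\<bar> * (C\<^sub>s * N powr (-\<alpha>\<^sub>1/\<alpha>) * t powr (-\<alpha> - \<alpha>\<^sub>1))"
        using e norm_hfun_deriv_le(2)[of q t] by (intro mult_mono) auto
      then have "ennreal (?h * ?e) \<le> ?B4"
        using False by (simp add: ennreal_leI mult.assoc)
      then show ?thesis
        by (rule order_trans) (metis add_increasing zero_le order_refl)
    qed
  qed
qed

lemma tail_error_integrals_le:
  fixes N \<alpha> \<alpha>\<^sub>1 c C\<^sub>s q :: real
  assumes "1 < \<alpha>" "\<alpha> < 2" "0 < \<alpha>\<^sub>1" "\<alpha>\<^sub>1 < 2 - \<alpha>" "0 \<le> c" "0 \<le> C\<^sub>s" "1 \<le> N"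
  defines "A \<equiv> N powr (-1/\<alpha>)" and "N' \<equiv> N powr (-\<alpha>\<^sub>1/\<alpha>)"
  shows "q\<^sup>2 * N * (A\<^sup>2 / 2) + q\<^sup>2 * c * (A powr (2 - \<alpha>) / (2 - \<alpha>))
      + q\<^sup>2 * C\<^sub>s * N' / (2 - \<alpha> - \<alpha>\<^sub>1) + 2 * \<bar>q\<bar> * C\<^sub>s * N' / (\<alpha> + \<alpha>\<^sub>1 - 1)
    \<le> tail_error_const \<alpha> \<alpha>\<^sub>1 c C\<^sub>s * N' * (\<bar>q\<bar> * (1 + \<bar>q\<bar>))"
proof -
  have N': "N powr (1 - 2/\<alpha>) \<le> N'"
    unfolding N'_def using assms by (intro powr_1_minus_2_div_le) auto
  have "A powr (2 - \<alpha>) = N powr ((-1/\<alpha>) * (2 - \<alpha>))"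
    by (simp add: A_def powr_powr)
  also have "(-1/\<alpha>) * (2 - \<alpha>) = 1 - 2/\<alpha>"
    using assms by (simp add: field_simps)
  finally have "N * A\<^sup>2 = N powr (1 - 2/\<alpha>)" "A powr (2 - \<alpha>) = N powr (1 - 2/\<alpha>)"
    using assms mult_power2_powr_neg_inverse[of N \<alpha>] by (simp_all add: A_def)
  then have "N * A\<^sup>2 \<le> N'" "A powr (2 - \<alpha>) \<le> N'"
    using N' by simp_all
  then have "q\<^sup>2 / 2 * (N * A\<^sup>2) \<le> q\<^sup>2 / 2 * N'"
    and "q\<^sup>2 * c / (2 - \<alpha>) * A powr (2 - \<alpha>) \<le> q\<^sup>2 * c / (2 - \<alpha>) * N'"
    using assms by (intro mult_left_mono; simp)+
  then have "q\<^sup>2 * N * (A\<^sup>2 / 2) + q\<^sup>2 * c * (A powr (2 - \<alpha>) / (2 - \<alpha>))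
      \<le> q\<^sup>2 * N' * (1/2 + c / (2 - \<alpha>))"
    by (simp add: algebra_simps)
  moreover have "q\<^sup>2 * N' * (1/2 + c / (2 - \<alpha>)) + q\<^sup>2 * C\<^sub>s * N' / (2 - \<alpha> - \<alpha>\<^sub>1)
      \<le> q\<^sup>2 * N' * tail_error_const \<alpha> \<alpha>\<^sub>1 c C\<^sub>s"
    and "2 * \<bar>q\<bar> * C\<^sub>s * N' / (\<alpha> + \<alpha>\<^sub>1 - 1) \<le> \<bar>q\<bar> * N' * tail_error_const \<alpha> \<alpha>\<^sub>1 c C\<^sub>s"
    using assms by (auto simp: tail_error_const_def N'_def algebra_simps intro!: mult_left_mono)
  ultimately show ?thesis
    by (simp add: algebra_simps power2_eq_square)
qed

lemma nn_integral_tail_error_majorant: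
  fixes N \<alpha> \<alpha>\<^sub>1 c C\<^sub>s q :: real
  assumes "1 < \<alpha>" "\<alpha> < 2" "0 < \<alpha>\<^sub>1" "\<alpha>\<^sub>1 < 2 - \<alpha>" "0 \<le> c" "0 \<le> C\<^sub>s" "1 \<le> N"
  defines "A \<equiv> N powr (-1/\<alpha>)" and "N' \<equiv> N powr (-\<alpha>\<^sub>1/\<alpha>)"
  shows "(\<integral>\<^sup>+t. ennreal (q\<^sup>2 * N * t) * indicator {0..A} t
      + ennreal (q\<^sup>2 * c * t powr (1 - \<alpha>)) * indicator {0..A} t
      + ennreal (q\<^sup>2 * C\<^sub>s * N' * t powr (1 - \<alpha> - \<alpha>\<^sub>1)) * indicator {0..1} t
      + ennreal (2 * \<bar>q\<bar> * C\<^sub>s * N' * t powr (-\<alpha> - \<alpha>\<^sub>1)) * indicator {1..} t \<partial>lborel)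
    = ennreal (q\<^sup>2 * N * (A\<^sup>2 / 2) + q\<^sup>2 * c * (A powr (2 - \<alpha>) / (2 - \<alpha>))
      + q\<^sup>2 * C\<^sub>s * N' / (2 - \<alpha> - \<alpha>\<^sub>1) + 2 * \<bar>q\<bar> * C\<^sub>s * N' / (\<alpha> + \<alpha>\<^sub>1 - 1))"
proof -
  have "(\<integral>\<^sup>+t. ennreal (q\<^sup>2 * N * t) * indicator {0..A} t \<partial>lborel)
      = (\<integral>\<^sup>+t. ennreal (q\<^sup>2 * N * t powr 1) * indicator {0..A} t \<partial>lborel)"
    by (intro nn_integral_cong) (auto simp: indicator_def)
  also have "\<dots> = ennreal (q\<^sup>2 * N * (A\<^sup>2 / 2))"
    using assms by (subst nn_integral_powr_atLeastAtMost_0) (auto simp: A_def powr_numeral)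
  finally have i1: "(\<integral>\<^sup>+t. ennreal (q\<^sup>2 * N * t) * indicator {0..A} t \<partial>lborel) = ennreal (q\<^sup>2 * N * (A\<^sup>2 / 2))" .
  have i2: "(\<integral>\<^sup>+t. ennreal (q\<^sup>2 * c * t powr (1 - \<alpha>)) * indicator {0..A} t \<partial>lborel)
      = ennreal (q\<^sup>2 * c * (A powr (2 - \<alpha>) / (2 - \<alpha>)))"
    using assms nn_integral_powr_atLeastAtMost_0[of A "1 - \<alpha>" "q\<^sup>2 * c"] by (simp add: A_def)
  have i3: "(\<integral>\<^sup>+t. ennreal (q\<^sup>2 * C\<^sub>s * N' * t powr (1 - \<alpha> - \<alpha>\<^sub>1)) * indicator {0..1} t \<partial>lborel)
      = ennreal (q\<^sup>2 * C\<^sub>s * N' / (2 - \<alpha> - \<alpha>\<^sub>1))"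
    using assms nn_integral_powr_atLeastAtMost_0[of 1 "1 - \<alpha> - \<alpha>\<^sub>1" "q\<^sup>2 * C\<^sub>s * N'"]
    by (simp add: N'_def)
  have i4: "(\<integral>\<^sup>+t. ennreal (2 * \<bar>q\<bar> * C\<^sub>s * N' * t powr (-\<alpha> - \<alpha>\<^sub>1)) * indicator {1..} t \<partial>lborel)
      = ennreal (2 * \<bar>q\<bar> * C\<^sub>s * N' / (\<alpha> + \<alpha>\<^sub>1 - 1))"
    using assms nn_integral_powr_atLeast[of 1 "-\<alpha> - \<alpha>\<^sub>1" "2 * \<bar>q\<bar> * C\<^sub>s * N'"]
    by (simp add: N'_def)
  have "(\<integral>\<^sup>+t. ennreal (q\<^sup>2 * N * t) * indicator {0..A} t
      + ennreal (q\<^sup>2 * c * t powr (1 - \<alpha>)) * indicator {0..A} t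
      + ennreal (q\<^sup>2 * C\<^sub>s * N' * t powr (1 - \<alpha> - \<alpha>\<^sub>1)) * indicator {0..1} t
      + ennreal (2 * \<bar>q\<bar> * C\<^sub>s * N' * t powr (-\<alpha> - \<alpha>\<^sub>1)) * indicator {1..} t \<partial>lborel)
    = (\<integral>\<^sup>+t. ennreal (q\<^sup>2 * N * t) * indicator {0..A} t \<partial>lborel)
      + (\<integral>\<^sup>+t. ennreal (q\<^sup>2 * c * t powr (1 - \<alpha>)) * indicator {0..A} t \<partial>lborel)
      + (\<integral>\<^sup>+t. ennreal (q\<^sup>2 * C\<^sub>s * N' * t powr (1 - \<alpha> - \<alpha>\<^sub>1)) * indicator {0..1} t \<partial>lborel)
      + (\<integral>\<^sup>+t. ennreal (2 * \<bar>q\<bar> * C\<^sub>s * N' * t powr (-\<alpha> - \<alpha>\<^sub>1)) * indicator {1..} t \<partial>lborel)"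
    by (simp add: nn_integral_add)
  also have "\<dots> = ennreal (q\<^sup>2 * N * (A\<^sup>2 / 2)) + ennreal (q\<^sup>2 * c * (A powr (2 - \<alpha>) / (2 - \<alpha>)))
      + ennreal (q\<^sup>2 * C\<^sub>s * N' / (2 - \<alpha> - \<alpha>\<^sub>1)) + ennreal (2 * \<bar>q\<bar> * C\<^sub>s * N' / (\<alpha> + \<alpha>\<^sub>1 - 1))"
    by (simp only: i1 i2 i3 i4)
  also have "\<dots> = ennreal (q\<^sup>2 * N * (A\<^sup>2 / 2) + q\<^sup>2 * c * (A powr (2 - \<alpha>) / (2 - \<alpha>))
      + q\<^sup>2 * C\<^sub>s * N' / (2 - \<alpha> - \<alpha>\<^sub>1) + 2 * \<bar>q\<bar> * C\<^sub>s * N' / (\<alpha> + \<alpha>\<^sub>1 - 1))"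
    using assms by (simp add: ennreal_plus N'_def)
  finally show ?thesis .
qed

lemma nn_integral_hfun_deriv_tail_error_le:
  fixes N \<alpha> \<alpha>\<^sub>1 c C\<^sub>s q :: real
  assumes "1 < \<alpha>" "\<alpha> < 2" "0 < \<alpha>\<^sub>1" "\<alpha>\<^sub>1 < 2 - \<alpha>" "0 \<le> c" "0 \<le> C\<^sub>s" "1 \<le> N"
    and \<Phi>: "\<And>l. 0 \<le> \<Phi> l" "\<And>l. \<Phi> l \<le> 1"
    and tail: "\<And>l. 1 \<le> l \<Longrightarrow> \<bar>\<Phi> l - c * l powr (-\<alpha>)\<bar> \<le> C\<^sub>s * l powr (-\<alpha> - \<alpha>\<^sub>1)"
  shows "(\<integral>\<^sup>+t. ennreal (cmod (hfun_deriv q t) * \<bar>N * \<Phi> (t * N powr (1/\<alpha>)) - c * t powr (-\<alpha>)\<bar>)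
            * indicator {0<..} t \<partial>lborel)
    \<le> ennreal (tail_error_const \<alpha> \<alpha>\<^sub>1 c C\<^sub>s * N powr (-\<alpha>\<^sub>1/\<alpha>) * (\<bar>q\<bar> * (1 + \<bar>q\<bar>)))"
proof -
  define A where "A = N powr (-1/\<alpha>)"
  define N' where "N' = N powr (-\<alpha>\<^sub>1/\<alpha>)"
  let ?B = "\<lambda>t. ennreal (q\<^sup>2 * N * t) * indicator {0..A} t
      + ennreal (q\<^sup>2 * c * t powr (1 - \<alpha>)) * indicator {0..A} t
      + ennreal (q\<^sup>2 * C\<^sub>s * N' * t powr (1 - \<alpha> - \<alpha>\<^sub>1)) * indicator {0..1} t
      + ennreal (2 * \<bar>q\<bar> * C\<^sub>s * N' * t powr (-\<alpha> - \<alpha>\<^sub>1)) * indicator {1..} t"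
  have "ennreal (cmod (hfun_deriv q t) * \<bar>N * \<Phi> (t * N powr (1/\<alpha>)) - c * t powr (-\<alpha>)\<bar>)
      * indicator {0<..} t \<le> ?B t" for t
    using norm_hfun_deriv_tail_error_le[OF assms(1,3,5,6,7) _ \<Phi> tail, of t q]
    by (cases "0 < t") (simp_all add: A_def N'_def)
  then have "(\<integral>\<^sup>+t. ennreal (cmod (hfun_deriv q t) * \<bar>N * \<Phi> (t * N powr (1/\<alpha>)) - c * t powr (-\<alpha>)\<bar>)
      * indicator {0<..} t \<partial>lborel) \<le> (\<integral>\<^sup>+t. ?B t \<partial>lborel)"
    by (intro nn_integral_mono)
  also have "\<dots> = ennreal (q\<^sup>2 * N * (A\<^sup>2 / 2) + q\<^sup>2 * c * (A powr (2 - \<alpha>) / (2 - \<alpha>))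
      + q\<^sup>2 * C\<^sub>s * N' / (2 - \<alpha> - \<alpha>\<^sub>1) + 2 * \<bar>q\<bar> * C\<^sub>s * N' / (\<alpha> + \<alpha>\<^sub>1 - 1))"
    unfolding A_def N'_def using assms(1-7) by (rule nn_integral_tail_error_majorant)
  also have "\<dots> \<le> ennreal (tail_error_const \<alpha> \<alpha>\<^sub>1 c C\<^sub>s * N' * (\<bar>q\<bar> * (1 + \<bar>q\<bar>)))"
    unfolding A_def N'_def using assms by (intro ennreal_leI tail_error_integrals_le) auto
  finally show ?thesis
    by (simp add: N'_def)
qed

section \<open>Layer-cake formula and the exponent \<open>\<psi>\<close>\<close>

lemma lborel_integral_Ioo_deriv:
  fixes g G :: "real \<Rightarrow> complex"
  assumes g: "continuous_on UNIV g" and G: "\<And>t. (G has_vector_derivative g t) (at t)" and "G 0 = 0"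
  shows "(\<integral>t. (if 0 < t \<and> t < x then g t else 0) \<partial>lborel) = (if 0 < x then G x else 0)"
proof (cases "0 < x")
  case True
  have [measurable]: "g \<in> borel_measurable borel"
    using g by (rule borel_measurable_continuous_onI)
  have "(\<integral>t. (if 0 < t \<and> t < x then g t else 0) \<partial>lborel) = (\<integral>t. indicator {0..x} t *\<^sub>R g t \<partial>lborel)"
  proof (rule integral_cong_AE)
    show "AE t in lborel. (if 0 < t \<and> t < x then g t else 0) = indicator {0..x} t *\<^sub>R g t"
      using AE_lborel_singleton[of 0] AE_lborel_singleton[of x]
      by eventually_elim (auto simp: indicator_def)
  qed measurable
  also have "\<dots> = G x - G 0"
    using True by (intro integral_FTC_atLeastAtMost has_vector_derivative_at_within[OF G]
        continuous_on_subset[OF g]) auto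
  finally show ?thesis
    using True \<open>G 0 = 0\<close> by simp
next
  case False
  then have "(\<lambda>t. if 0 < t \<and> t < x then g t else 0) = (\<lambda>_. 0)"
    by (auto simp: fun_eq_iff)
  then show ?thesis
    using False by simp
qed

lemma layer_cake:
  fixes M :: "'b measure" and X :: "'b \<Rightarrow> real" and g G :: "real \<Rightarrow> complex"
  assumes "sigma_finite_measure M"
    and X[measurable]: "X \<in> borel_measurable M"
    and g: "continuous_on UNIV g"
    and G: "\<And>t. (G has_vector_derivative g t) (at t)" "G 0 = 0"
    and finite_tail: "\<And>t. 0 < t \<Longrightarrow> emeasure M {x\<in>space M. t < X x} < \<infinity>"
    and bounded: "(\<integral>\<^sup>+t. indicator {0<..} t * ennreal (cmod (g t)) * emeasure M {x\<in>space M. t < X x} \<partial>lborel) < \<infinity>"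
  shows "integrable M (\<lambda>x. if 0 < X x then G (X x) else 0)"
    and "integrable lborel (\<lambda>t. if 0 < t then g t * measure M {x\<in>space M. t < X x} else 0)"
    and "(\<integral>x. (if 0 < X x then G (X x) else 0) \<partial>M)
       = (\<integral>t. (if 0 < t then g t * measure M {x\<in>space M. t < X x} else 0) \<partial>lborel)"
proof -
  interpret pair_sigma_finite M "lborel :: real measure"
    by (simp add: pair_sigma_finite_def assms(1) lborel.sigma_finite_measure_axioms)
  have [measurable]: "g \<in> borel_measurable borel"
    using g by (rule borel_measurable_continuous_onI)
  define f where "f x t = (if 0 < t \<and> t < X x then g t else 0)" for x t
  have [measurable]: "case_prod f \<in> borel_measurable (M \<Otimes>\<^sub>M lborel)"
    unfolding f_def by measurable
  have "(\<integral>\<^sup>+x. ennreal (norm (f x t)) \<partial>M)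
      = indicator {0<..} t * ennreal (cmod (g t)) * emeasure M {x\<in>space M. t < X x}" for t
  proof -
    have "(\<integral>\<^sup>+x. ennreal (norm (f x t)) \<partial>M)
        = (\<integral>\<^sup>+x. indicator {0<..} t * ennreal (cmod (g t)) * indicator {x\<in>space M. t < X x} x \<partial>M)"
      by (intro nn_integral_cong) (auto simp: f_def indicator_def)
    then show ?thesis
      by (simp add: nn_integral_cmult_indicator)
  qed
  then have "(\<integral>\<^sup>+z. ennreal (norm (case_prod f z)) \<partial>(M \<Otimes>\<^sub>M lborel)) < \<infinity>"
    using bounded by (subst nn_integral_snd[symmetric]) auto
  then have int: "integrable (M \<Otimes>\<^sub>M lborel) (case_prod f)"
    by (intro integrableI_bounded) auto
  have inner_t: "(\<integral>t. f x t \<partial>lborel) = (if 0 < X x then G (X x) else 0)" for x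
    unfolding f_def using g G by (rule lborel_integral_Ioo_deriv)
  have inner_x: "(\<integral>x. f x t \<partial>M) = (if 0 < t then g t * measure M {x\<in>space M. t < X x} else 0)" for t
  proof (cases "0 < t")
    case True
    have "(\<integral>x. f x t \<partial>M) = (\<integral>x. indicator {x\<in>space M. t < X x} x *\<^sub>R g t \<partial>M)"
      by (intro Bochner_Integration.integral_cong) (auto simp: f_def True indicator_def)
    also have "\<dots> = measure M {x\<in>space M. t < X x} *\<^sub>R g t"
      using finite_tail[OF True] by (subst integral_scaleR_left) (auto simp: integral_indicator)
    finally show ?thesis
      using True by (simp add: scaleR_conv_of_real mult.commute)
  qed (simp add: f_def)
  show "integrable M (\<lambda>x. if 0 < X x then G (X x) else 0)"
    using integrable_fst[OF int] by (simp add: inner_t)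
  show "integrable lborel (\<lambda>t. if 0 < t then g t * measure M {x\<in>space M. t < X x} else 0)"
    using integrable_snd[OF int] by (simp add: inner_x)
  show "(\<integral>x. (if 0 < X x then G (X x) else 0) \<partial>M)
      = (\<integral>t. (if 0 < t then g t * measure M {x\<in>space M. t < X x} else 0) \<partial>lborel)"
    using Fubini_integral[OF int] by (simp add: inner_t inner_x)
qed

text \<open>The positive half of the Levy measure of \<open>\<psi>\<close>, with \<open>\<nu>(t, \<infinity>) = t^(-\<alpha>)\<close>.\<close>

definition power_tail_measure :: "real \<Rightarrow> real measure" where
  "power_tail_measure \<alpha> = density lborel (\<lambda>l. ennreal (if 0 < l then \<alpha> * l powr (-1 - \<alpha>) else 0))"

lemma space_power_tail_measure [simp]: "space (power_tail_measure \<alpha>) = UNIV"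
  by (simp add: power_tail_measure_def)

lemma sets_power_tail_measure [simp]: "sets (power_tail_measure \<alpha>) = sets borel"
  by (simp add: power_tail_measure_def)

lemma sigma_finite_power_tail_measure: "sigma_finite_measure (power_tail_measure \<alpha>)"
  unfolding power_tail_measure_def
  by (subst sigma_finite_measure.sigma_finite_iff_density_finite[OF sigma_finite_lborel]) auto

lemma emeasure_power_tail_measure_greaterThan:
  assumes "0 < \<alpha>" "0 < t"
  shows "emeasure (power_tail_measure \<alpha>) {x. t < x} = ennreal (t powr (-\<alpha>))"
proof -
  have "emeasure (power_tail_measure \<alpha>) {x. t < x}
      = (\<integral>\<^sup>+l. ennreal (if 0 < l then \<alpha> * l powr (-1 - \<alpha>) else 0) * indicator {t<..} l \<partial>lborel)"
    unfolding power_tail_measure_def by (subst emeasure_density) (auto simp: greaterThan_def)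
  also have "\<dots> = (\<integral>\<^sup>+l. ennreal (\<alpha> * l powr (-1 - \<alpha>)) * indicator {t..} l \<partial>lborel)"
    using AE_lborel_singleton[of t] assms
    by (intro nn_integral_cong_AE) (auto elim!: eventually_mono simp: indicator_def)
  also have "\<dots> = ennreal (t powr (-\<alpha>))"
    using assms by (subst nn_integral_powr_atLeast) auto
  finally show ?thesis .
qed

definition hfun_tail_integral :: "real \<Rightarrow> real \<Rightarrow> complex" where
  "hfun_tail_integral \<alpha> q = (\<integral>t. (if 0 < t then hfun_deriv q t * t powr (-\<alpha>) else 0) \<partial>lborel)"

lemma power_tail_layer_cake:
  assumes "1 < \<alpha>" "\<alpha> < 2"
  shows "integrable lborel (\<lambda>t. if 0 < t then hfun_deriv q t * t powr (-\<alpha>) else 0)"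
    and "integrable lborel (\<lambda>l. (if 0 < l then \<alpha> * l powr (-1 - \<alpha>) else 0) *\<^sub>R (if 0 < l then hfun q l else 0))"
    and "(\<integral>l. (if 0 < l then \<alpha> * l powr (-1 - \<alpha>) else 0) *\<^sub>R (if 0 < l then hfun q l else 0) \<partial>lborel)
       = hfun_tail_integral \<alpha> q"
proof -
  let ?\<nu> = "power_tail_measure \<alpha>"
  have tail: "emeasure ?\<nu> {x. t < x} = ennreal (t powr (-\<alpha>))" if "0 < t" for t
    using emeasure_power_tail_measure_greaterThan[OF _ that] assms by simp
  have "(\<integral>\<^sup>+t. indicator {0<..} t * ennreal (cmod (hfun_deriv q t)) * emeasure ?\<nu> {x\<in>space ?\<nu>. t < x} \<partial>lborel)
      = (\<integral>\<^sup>+t. ennreal (cmod (hfun_deriv q t) * t powr (-\<alpha>)) * indicator {0<..} t \<partial>lborel)"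
    by (intro nn_integral_cong) (auto simp: tail ennreal_mult indicator_def)
  also have "\<dots> < \<infinity>"
    using assms by (rule nn_integral_norm_hfun_deriv_powr_finite)
  finally have bounded: "(\<integral>\<^sup>+t. indicator {0<..} t * ennreal (cmod (hfun_deriv q t))
      * emeasure ?\<nu> {x\<in>space ?\<nu>. t < x} \<partial>lborel) < \<infinity>" .
  have id: "(\<lambda>x. x) \<in> borel_measurable ?\<nu>"
    using measurable_ident_sets[of ?\<nu> borel] by simp
  have finite_tail: "\<And>t. 0 < t \<Longrightarrow> emeasure ?\<nu> {x\<in>space ?\<nu>. t < x} < \<infinity>"
    using tail by simp
  note L = layer_cake[where X="\<lambda>x. x", OF sigma_finite_power_tail_measure id continuous_on_hfun_deriv
      has_vector_derivative_hfun hfun_0 finite_tail bounded]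
  have tail': "measure ?\<nu> {x. t < x} = t powr (-\<alpha>)" if "0 < t" for t
    using tail[OF that] by (simp add: measure_def)
  have eq: "(\<lambda>t. if 0 < t then hfun_deriv q t * measure ?\<nu> {x\<in>space ?\<nu>. t < x} else 0)
      = (\<lambda>t. if 0 < t then hfun_deriv q t * t powr (-\<alpha>) else 0)"
    by (auto simp: tail' fun_eq_iff)
  have density: "(\<lambda>l. if 0 < l then \<alpha> * l powr (-1 - \<alpha>) else 0) \<in> borel_measurable lborel"
    "AE l in lborel. 0 \<le> (if 0 < l then \<alpha> * l powr (-1 - \<alpha>) else 0)"
    using assms by auto
  show "integrable lborel (\<lambda>t. if 0 < t then hfun_deriv q t * t powr (-\<alpha>) else 0)"
    using L(2) unfolding eq by simp
  show "integrable lborel (\<lambda>l. (if 0 < l then \<alpha> * l powr (-1 - \<alpha>) else 0) *\<^sub>R (if 0 < l then hfun q l else 0))"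
  proof -
    have "integrable ?\<nu> (\<lambda>x. if 0 < x then hfun q x else 0)"
      using L(1) by simp
    then show ?thesis
      unfolding power_tail_measure_def
      by (subst (asm) integrable_density[OF _ density]) (auto simp: hfun_def)
  qed
  have "(\<integral>l. (if 0 < l then \<alpha> * l powr (-1 - \<alpha>) else 0) *\<^sub>R (if 0 < l then hfun q l else 0) \<partial>lborel)
      = (\<integral>x. (if 0 < x then hfun q x else 0) \<partial>?\<nu>)"
    unfolding power_tail_measure_def by (subst integral_density[OF _ density]) (auto simp: hfun_def)
  also have "\<dots> = hfun_tail_integral \<alpha> q"
    using L(3) unfolding eq hfun_tail_integral_def by simp
  finally show "(\<integral>l. (if 0 < l then \<alpha> * l powr (-1 - \<alpha>) else 0) *\<^sub>R (if 0 < l then hfun q l else 0) \<partial>lborel)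
       = hfun_tail_integral \<alpha> q" .
qed

lemma psi_exp_eq_hfun_tail_integral:
  assumes "1 < \<alpha>" "\<alpha> < 2"
  shows "psi_exp \<alpha> cp cm q
    = - (complex_of_real cp * hfun_tail_integral \<alpha> q + complex_of_real cm * hfun_tail_integral \<alpha> (-q))"
proof -
  define f where "f q' l = (if 0 < l then \<alpha> * l powr (-1 - \<alpha>) else 0) *\<^sub>R (if 0 < l then hfun q' l else 0)"
    for q' l :: real
  have "\<alpha> \<noteq> 0"
    using assms by simp
  have integrand: "(1 + \<i> * complex_of_real (l * q) - cis (l * q)) * complex_of_real (cstar cp cm l * \<bar>l\<bar> powr (-1 - \<alpha>))
      = - (complex_of_real (cp / \<alpha>) * f q l) - complex_of_real (cm / \<alpha>) * f (-q) (-l)" for l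
  proof -
    consider "0 < l" | "l = 0" | "l < 0"
      by linarith
    then show ?thesis
    proof cases
      case 3
      then show ?thesis
        using \<open>\<alpha> \<noteq> 0\<close> hfun_uminus[of "-q" l]
        by (simp add: f_def cstar_def hfun_def scaleR_conv_of_real algebra_simps)
    qed (use \<open>\<alpha> \<noteq> 0\<close> in \<open>simp_all add: f_def cstar_def hfun_def scaleR_conv_of_real algebra_simps\<close>)
  qed
  have int: "integrable lborel (f q)" "integrable lborel (f (-q))"
    unfolding f_def using power_tail_layer_cake(2)[OF assms] by blast+
  then have int_reflected: "integrable lborel (\<lambda>l. f (-q) (-l))"
    using lborel_integrable_real_affine[of "f (-q)" "-1" 0] by simp
  have reflect: "(\<integral>l. f (-q) (-l) \<partial>lborel) = (\<integral>l. f (-q) l \<partial>lborel)"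
    using lborel_integral_real_affine[of "-1" "f (-q)" 0] by simp
  have "psi_exp \<alpha> cp cm q
      = complex_of_real \<alpha> * (\<integral>l. - (complex_of_real (cp / \<alpha>) * f q l) - complex_of_real (cm / \<alpha>) * f (-q) (-l) \<partial>lborel)"
    unfolding psi_exp_def integrand ..
  also have "\<dots> = - (complex_of_real cp * (\<integral>l. f q l \<partial>lborel) + complex_of_real cm * (\<integral>l. f (-q) l \<partial>lborel))"
    using int int_reflected \<open>\<alpha> \<noteq> 0\<close> by (simp add: reflect algebra_simps of_real_divide)
  also have "\<dots> = - (complex_of_real cp * hfun_tail_integral \<alpha> q + complex_of_real cm * hfun_tail_integral \<alpha> (-q))"
    unfolding f_def power_tail_layer_cake(3)[OF assms] ..
  finally show ?thesis .
qed

lemma nn_integral_norm_hfun_deriv_rescaled_finite: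
  fixes N \<alpha> c :: real
  assumes "1 < \<alpha>" "\<alpha> < 2" "0 \<le> c" "0 < N"
    and [measurable]: "\<Phi> \<in> borel_measurable borel" and "\<And>l. 0 \<le> \<Phi> l"
    and error_finite: "(\<integral>\<^sup>+t. ennreal (cmod (hfun_deriv q t) * \<bar>N * \<Phi> (t * N powr (1/\<alpha>)) - c * t powr (-\<alpha>)\<bar>)
            * indicator {0<..} t \<partial>lborel) < \<infinity>"
  shows "(\<integral>\<^sup>+t. ennreal (cmod (hfun_deriv q t) * \<Phi> (t * N powr (1/\<alpha>))) * indicator {0<..} t \<partial>lborel) < \<infinity>"
proof -
  let ?E = "\<lambda>t. cmod (hfun_deriv q t) * \<bar>N * \<Phi> (t * N powr (1/\<alpha>)) - c * t powr (-\<alpha>)\<bar>"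
  let ?H = "\<lambda>t. cmod (hfun_deriv q t) * t powr (-\<alpha>)"
  have "ennreal (cmod (hfun_deriv q t) * \<Phi> (t * N powr (1/\<alpha>))) * indicator {0<..} t
      \<le> ennreal (1/N) * (ennreal (?E t) * indicator {0<..} t + ennreal c * (ennreal (?H t) * indicator {0<..} t))"
    for t
  proof -
    have "N * \<Phi> (t * N powr (1/\<alpha>)) \<le> \<bar>N * \<Phi> (t * N powr (1/\<alpha>)) - c * t powr (-\<alpha>)\<bar> + c * t powr (-\<alpha>)"
      by linarith
    then have "N * (cmod (hfun_deriv q t) * \<Phi> (t * N powr (1/\<alpha>))) \<le> ?E t + c * ?H t"
      by (metis mult_left_mono norm_ge_zero distrib_left mult.left_commute)
    then have "cmod (hfun_deriv q t) * \<Phi> (t * N powr (1/\<alpha>)) \<le> 1/N * (?E t + c * ?H t)"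
      using \<open>0 < N\<close> by (simp add: field_simps)
    then have "ennreal (cmod (hfun_deriv q t) * \<Phi> (t * N powr (1/\<alpha>))) \<le> ennreal (1/N) * (ennreal (?E t) + ennreal c * ennreal (?H t))"
      using assms by (simp add: ennreal_mult[symmetric] ennreal_plus[symmetric] ennreal_leI del: ennreal_plus)
    then show ?thesis
      by (auto simp: indicator_def)
  qed
  then have "(\<integral>\<^sup>+t. ennreal (cmod (hfun_deriv q t) * \<Phi> (t * N powr (1/\<alpha>))) * indicator {0<..} t \<partial>lborel)
      \<le> ennreal (1/N) * ((\<integral>\<^sup>+t. ennreal (?E t) * indicator {0<..} t \<partial>lborel)
          + ennreal c * (\<integral>\<^sup>+t. ennreal (?H t) * indicator {0<..} t \<partial>lborel))"
    by (subst nn_integral_cmult[symmetric] nn_integral_add[symmetric], simp, simp)+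
      (auto intro!: nn_integral_mono)
  also have "\<dots> < \<infinity>"
    using error_finite nn_integral_norm_hfun_deriv_powr_finite[OF assms(1,2), of q]
    by (simp add: ennreal_mult_less_top ennreal_less_top)
  finally show ?thesis .
qed

lemma half_line_hfun_expectation_error_le:
  fixes \<pi> :: "'a measure" and X :: "'a \<Rightarrow> real" and \<Phi> :: "real \<Rightarrow> real" and N \<alpha> \<alpha>\<^sub>1 c C\<^sub>s :: real
  assumes "prob_space \<pi>" and [measurable]: "X \<in> borel_measurable \<pi>"
    and a: "1 < \<alpha>" "\<alpha> < 2" "0 < \<alpha>\<^sub>1" "\<alpha>\<^sub>1 < 2 - \<alpha>" "0 \<le> c" "0 \<le> C\<^sub>s" "1 \<le> N"
    and [measurable]: "\<Phi> \<in> borel_measurable borel"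
    and \<Phi>: "\<And>l. 0 \<le> \<Phi> l" "\<And>l. \<Phi> l \<le> 1"
    and tail: "\<And>l. 1 \<le> l \<Longrightarrow> \<bar>\<Phi> l - c * l powr (-\<alpha>)\<bar> \<le> C\<^sub>s * l powr (-\<alpha> - \<alpha>\<^sub>1)"
    and distribution: "\<And>t. 0 < t \<Longrightarrow> measure \<pi> {x\<in>space \<pi>. t < X x} = \<Phi> (t * N powr (1/\<alpha>))"
  shows "integrable \<pi> (\<lambda>x. if 0 < X x then hfun q (X x) else 0)"
    and "cmod (complex_of_real N * (\<integral>x. (if 0 < X x then hfun q (X x) else 0) \<partial>\<pi>)
              - complex_of_real c * hfun_tail_integral \<alpha> q)
         \<le> tail_error_const \<alpha> \<alpha>\<^sub>1 c C\<^sub>s * N powr (-\<alpha>\<^sub>1/\<alpha>) * (\<bar>q\<bar> * (1 + \<bar>q\<bar>))"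
proof -
  interpret prob_space \<pi> by fact
  let ?E = "\<lambda>t. cmod (hfun_deriv q t) * \<bar>N * \<Phi> (t * N powr (1/\<alpha>)) - c * t powr (-\<alpha>)\<bar>"
  have error: "(\<integral>\<^sup>+t. ennreal (?E t) * indicator {0<..} t \<partial>lborel)
     \<le> ennreal (tail_error_const \<alpha> \<alpha>\<^sub>1 c C\<^sub>s * N powr (-\<alpha>\<^sub>1/\<alpha>) * (\<bar>q\<bar> * (1 + \<bar>q\<bar>)))"
    using a \<Phi> tail by (rule nn_integral_hfun_deriv_tail_error_le)
  have "(\<integral>\<^sup>+t. indicator {0<..} t * ennreal (cmod (hfun_deriv q t)) * emeasure \<pi> {x\<in>space \<pi>. t < X x} \<partial>lborel)
      = (\<integral>\<^sup>+t. ennreal (cmod (hfun_deriv q t) * \<Phi> (t * N powr (1/\<alpha>))) * indicator {0<..} t \<partial>lborel)"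
    using \<Phi> by (intro nn_integral_cong) (auto simp: emeasure_eq_measure distribution ennreal_mult indicator_def)
  also have "\<dots> < \<infinity>"
    using a \<Phi> error by (intro nn_integral_norm_hfun_deriv_rescaled_finite) (auto simp: ennreal_less_top
        intro: order_le_less_trans)
  finally have bounded: "(\<integral>\<^sup>+t. indicator {0<..} t * ennreal (cmod (hfun_deriv q t))
      * emeasure \<pi> {x\<in>space \<pi>. t < X x} \<partial>lborel) < \<infinity>" .
  have finite_tail: "\<And>t. 0 < t \<Longrightarrow> emeasure \<pi> {x\<in>space \<pi>. t < X x} < \<infinity>"
    by (simp add: less_top[symmetric])
  note L = layer_cake[OF prob_space_imp_sigma_finite[OF prob_space_axioms] _ continuous_on_hfun_deriv
      has_vector_derivative_hfun hfun_0 finite_tail bounded]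
  show "integrable \<pi> (\<lambda>x. if 0 < X x then hfun q (X x) else 0)"
    using L(1) by simp
  have eq: "(\<lambda>t. if 0 < t then hfun_deriv q t * measure \<pi> {x\<in>space \<pi>. t < X x} else 0)
      = (\<lambda>t. if 0 < t then hfun_deriv q t * \<Phi> (t * N powr (1/\<alpha>)) else 0)"
    by (auto simp: distribution fun_eq_iff)
  have int: "integrable lborel (\<lambda>t. if 0 < t then hfun_deriv q t * \<Phi> (t * N powr (1/\<alpha>)) else 0)"
    "integrable lborel (\<lambda>t. if 0 < t then hfun_deriv q t * t powr (-\<alpha>) else 0)"
    using L(2) power_tail_layer_cake(1)[OF a(1,2)] by (simp_all add: eq)
  let ?D = "\<lambda>t. if 0 < t then hfun_deriv q t * complex_of_real (N * \<Phi> (t * N powr (1/\<alpha>)) - c * t powr (-\<alpha>)) else 0"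
  have D: "(\<lambda>t. complex_of_real N * (if 0 < t then hfun_deriv q t * \<Phi> (t * N powr (1/\<alpha>)) else 0)
      - complex_of_real c * (if 0 < t then hfun_deriv q t * t powr (-\<alpha>) else 0)) = ?D"
    by (auto simp: algebra_simps fun_eq_iff)
  have "integrable lborel ?D"
    using int by (simp flip: D)
  have "complex_of_real N * (\<integral>x. (if 0 < X x then hfun q (X x) else 0) \<partial>\<pi>) - complex_of_real c * hfun_tail_integral \<alpha> q
      = complex_of_real N * (\<integral>t. (if 0 < t then hfun_deriv q t * \<Phi> (t * N powr (1/\<alpha>)) else 0) \<partial>lborel)
        - complex_of_real c * (\<integral>t. (if 0 < t then hfun_deriv q t * t powr (-\<alpha>) else 0) \<partial>lborel)"
    using L(3) by (simp add: eq hfun_tail_integral_def)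
  also have "\<dots> = (\<integral>t. complex_of_real N * (if 0 < t then hfun_deriv q t * \<Phi> (t * N powr (1/\<alpha>)) else 0)
      - complex_of_real c * (if 0 < t then hfun_deriv q t * t powr (-\<alpha>) else 0) \<partial>lborel)"
    using int by simp
  also have "\<dots> = (\<integral>t. ?D t \<partial>lborel)"
    unfolding D ..
  finally have "ennreal (cmod (complex_of_real N * (\<integral>x. (if 0 < X x then hfun q (X x) else 0) \<partial>\<pi>)
      - complex_of_real c * hfun_tail_integral \<alpha> q)) \<le> (\<integral>\<^sup>+t. ennreal (cmod (?D t)) \<partial>lborel)"
    using \<open>integrable lborel ?D\<close> by (simp add: integral_norm_bound_ennreal)
  also have "\<dots> = (\<integral>\<^sup>+t. ennreal (?E t) * indicator {0<..} t \<partial>lborel)"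
    by (intro nn_integral_cong) (auto simp: norm_mult simp del: of_real_diff of_real_mult)
  also have "\<dots> \<le> ennreal (tail_error_const \<alpha> \<alpha>\<^sub>1 c C\<^sub>s * N powr (-\<alpha>\<^sub>1/\<alpha>) * (\<bar>q\<bar> * (1 + \<bar>q\<bar>)))"
    by (rule error)
  finally show "cmod (complex_of_real N * (\<integral>x. (if 0 < X x then hfun q (X x) else 0) \<partial>\<pi>)
              - complex_of_real c * hfun_tail_integral \<alpha> q)
         \<le> tail_error_const \<alpha> \<alpha>\<^sub>1 c C\<^sub>s * N powr (-\<alpha>\<^sub>1/\<alpha>) * (\<bar>q\<bar> * (1 + \<bar>q\<bar>))"
    using a tail_error_const_nonneg[of \<alpha> \<alpha>\<^sub>1 c C\<^sub>s] by (simp add: ennreal_le_iff)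
qed

lemma borel_measurable_antimono:
  fixes f :: "real \<Rightarrow> real"
  assumes "antimono f"
  shows "f \<in> borel_measurable borel"
proof -
  have "mono (\<lambda>x. - f x)"
    using assms by (auto simp: mono_def antimono_def)
  then have "(\<lambda>x. - (- f x)) \<in> borel_measurable borel"
    by (intro borel_measurable_uminus borel_measurable_mono)
  then show ?thesis
    by simp
qed

lemma less_mult_powr_iff:
  fixes N t y \<alpha> :: real
  assumes "0 < N"
  shows "t < N powr (-1/\<alpha>) * y \<longleftrightarrow> t * N powr (1/\<alpha>) < y"
proof -
  have eq: "N powr (-1/\<alpha>) * y * N powr (1/\<alpha>) = y"
    using assms by (simp add: powr_minus field_simps)
  have "t < N powr (-1/\<alpha>) * y \<longleftrightarrow> t * N powr (1/\<alpha>) < N powr (-1/\<alpha>) * y * N powr (1/\<alpha>)"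
    using assms by (intro mult_less_cancel_right_pos[symmetric]) simp
  then show ?thesis
    unfolding eq .
qed

lemma hfun_split_sign:
  "hfun q x = (if 0 < x then hfun q x else 0) + (if 0 < - x then hfun (-q) (- x) else 0)"
  using hfun_uminus[of "-q" x] by auto

lemma norm_scaled_hfun_expectation_add_psi_le:
  fixes \<pi> :: "'a measure" and \<Psi> :: "'a \<Rightarrow> real" and N \<alpha> \<alpha>\<^sub>1 cp cm C\<^sub>s :: real
  assumes "prob_space \<pi>" and [measurable]: "\<Psi> \<in> borel_measurable \<pi>"
    and a: "1 < \<alpha>" "\<alpha> < 2" "0 < \<alpha>\<^sub>1" "\<alpha>\<^sub>1 < 2 - \<alpha>" "0 \<le> cp" "0 \<le> cm" "0 \<le> C\<^sub>s" "1 \<le> N"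
    and tails: "\<And>l. l \<ge> 1 \<Longrightarrow>
        \<bar>measure \<pi> {v \<in> space \<pi>. \<Psi> v > l} - cp * l powr (-\<alpha>)\<bar>
        + \<bar>measure \<pi> {v \<in> space \<pi>. \<Psi> v < - l} - cm * l powr (-\<alpha>)\<bar>
        \<le> C\<^sub>s * l powr (-\<alpha> - \<alpha>\<^sub>1)"
  shows "integrable \<pi> (\<lambda>v. hfun q (N powr (-1/\<alpha>) * \<Psi> v))"
    and "cmod (complex_of_real N * (\<integral>v. hfun q (N powr (-1/\<alpha>) * \<Psi> v) \<partial>\<pi>) + psi_exp \<alpha> cp cm q)
      \<le> (tail_error_const \<alpha> \<alpha>\<^sub>1 cp C\<^sub>s + tail_error_const \<alpha> \<alpha>\<^sub>1 cm C\<^sub>s) * N powr (-\<alpha>\<^sub>1/\<alpha>) * (\<bar>q\<bar> * (1 + \<bar>q\<bar>))"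
proof -
  interpret prob_space \<pi> by fact
  define X where "X v = N powr (-1/\<alpha>) * \<Psi> v" for v
  define \<Phi>\<^sub>p where "\<Phi>\<^sub>p l = measure \<pi> {v\<in>space \<pi>. l < \<Psi> v}" for l
  define \<Phi>\<^sub>m where "\<Phi>\<^sub>m l = measure \<pi> {v\<in>space \<pi>. l < - \<Psi> v}" for l
  have X_meas [measurable]: "X \<in> borel_measurable \<pi>"
    and \<Phi>_meas [measurable]: "\<Phi>\<^sub>p \<in> borel_measurable borel" "\<Phi>\<^sub>m \<in> borel_measurable borel"
    unfolding X_def \<Phi>\<^sub>p_def \<Phi>\<^sub>m_def
    by (auto intro!: borel_measurable_antimono finite_measure_mono simp: antimono_def)
  have \<Phi>_bounds: "0 \<le> \<Phi>\<^sub>p l" "\<Phi>\<^sub>p l \<le> 1" "0 \<le> \<Phi>\<^sub>m l" "\<Phi>\<^sub>m l \<le> 1" for l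
    unfolding \<Phi>\<^sub>p_def \<Phi>\<^sub>m_def by auto
  have tail_pos: "\<bar>\<Phi>\<^sub>p l - cp * l powr (-\<alpha>)\<bar> \<le> C\<^sub>s * l powr (-\<alpha> - \<alpha>\<^sub>1)"
    and tail_neg: "\<bar>\<Phi>\<^sub>m l - cm * l powr (-\<alpha>)\<bar> \<le> C\<^sub>s * l powr (-\<alpha> - \<alpha>\<^sub>1)" if "1 \<le> l" for l
    using tails[OF that] unfolding \<Phi>\<^sub>p_def \<Phi>\<^sub>m_def by (auto simp: less_minus_iff)
  have dist_pos: "measure \<pi> {v\<in>space \<pi>. t < X v} = \<Phi>\<^sub>p (t * N powr (1/\<alpha>))"
    and dist_neg: "measure \<pi> {v\<in>space \<pi>. t < - X v} = \<Phi>\<^sub>m (t * N powr (1/\<alpha>))" for t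
    using a less_mult_powr_iff[of N t \<alpha>] less_mult_powr_iff[of N t \<alpha> "- \<Psi> v" for v]
    by (simp_all add: X_def \<Phi>\<^sub>p_def \<Phi>\<^sub>m_def)
  note pos = half_line_hfun_expectation_error_le[OF assms(1) X_meas a(1-5,7,8) \<Phi>_meas(1) \<Phi>_bounds(1,2) tail_pos dist_pos,
      where q=q]
  note neg = half_line_hfun_expectation_error_le[OF assms(1) borel_measurable_uminus[OF X_meas] a(1-4,6-8) \<Phi>_meas(2)
      \<Phi>_bounds(3,4) tail_neg dist_neg, where q="-q"]
  have "integrable \<pi> (\<lambda>v. hfun q (X v))"
    by (subst hfun_split_sign) (intro Bochner_Integration.integrable_add pos(1) neg(1))
  then show "integrable \<pi> (\<lambda>v. hfun q (N powr (-1/\<alpha>) * \<Psi> v))"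
    by (simp add: X_def)
  have "(\<integral>v. hfun q (X v) \<partial>\<pi>) = (\<integral>v. (if 0 < X v then hfun q (X v) else 0) \<partial>\<pi>)
      + (\<integral>v. (if 0 < - X v then hfun (-q) (- X v) else 0) \<partial>\<pi>)"
    by (subst hfun_split_sign) (intro Bochner_Integration.integral_add pos(1) neg(1))
  then have "complex_of_real N * (\<integral>v. hfun q (X v) \<partial>\<pi>) + psi_exp \<alpha> cp cm q
      = (complex_of_real N * (\<integral>v. (if 0 < X v then hfun q (X v) else 0) \<partial>\<pi>)
          - complex_of_real cp * hfun_tail_integral \<alpha> q)
      + (complex_of_real N * (\<integral>v. (if 0 < - X v then hfun (-q) (- X v) else 0) \<partial>\<pi>)
          - complex_of_real cm * hfun_tail_integral \<alpha> (-q))"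
    unfolding psi_exp_eq_hfun_tail_integral[OF a(1,2)] by (simp add: algebra_simps)
  then have "cmod (complex_of_real N * (\<integral>v. hfun q (X v) \<partial>\<pi>) + psi_exp \<alpha> cp cm q)
      \<le> cmod (complex_of_real N * (\<integral>v. (if 0 < X v then hfun q (X v) else 0) \<partial>\<pi>)
          - complex_of_real cp * hfun_tail_integral \<alpha> q)
      + cmod (complex_of_real N * (\<integral>v. (if 0 < - X v then hfun (-q) (- X v) else 0) \<partial>\<pi>)
          - complex_of_real cm * hfun_tail_integral \<alpha> (-q))"
    by (simp only: norm_triangle_ineq)
  also have "\<dots> \<le> tail_error_const \<alpha> \<alpha>\<^sub>1 cp C\<^sub>s * N powr (-\<alpha>\<^sub>1/\<alpha>) * (\<bar>q\<bar> * (1 + \<bar>q\<bar>))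
        + tail_error_const \<alpha> \<alpha>\<^sub>1 cm C\<^sub>s * N powr (-\<alpha>\<^sub>1/\<alpha>) * (\<bar>-q\<bar> * (1 + \<bar>-q\<bar>))"
    by (rule add_mono[OF pos(2) neg(2)])
  finally show "cmod (complex_of_real N * (\<integral>v. hfun q (N powr (-1/\<alpha>) * \<Psi> v) \<partial>\<pi>) + psi_exp \<alpha> cp cm q)
      \<le> (tail_error_const \<alpha> \<alpha>\<^sub>1 cp C\<^sub>s + tail_error_const \<alpha> \<alpha>\<^sub>1 cm C\<^sub>s) * N powr (-\<alpha>\<^sub>1/\<alpha>) * (\<bar>q\<bar> * (1 + \<bar>q\<bar>))"
    by (simp add: X_def algebra_simps)
qed

section \<open>The Markov chain increment\<close>

lemma norm_expectation_hfun_perturb_le: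
  fixes M :: "'b measure" and Y Z :: "'b \<Rightarrow> real"
  assumes "prob_space M"
    and [measurable]: "Y \<in> borel_measurable M" "Z \<in> borel_measurable M"
    and "integrable M Y" "integrable M (\<lambda>\<omega>. hfun q (Y \<omega>))"
    and close: "AE \<omega> in M. \<bar>Z \<omega> - Y \<omega>\<bar> \<le> B"
  shows "integrable M (\<lambda>\<omega>. hfun q (Z \<omega>))"
    and "cmod ((\<integral>\<omega>. hfun q (Z \<omega>) \<partial>M) - (\<integral>\<omega>. hfun q (Y \<omega>) \<partial>M))
      \<le> q\<^sup>2 * (B\<^sup>2 / 2 + B * (\<integral>\<omega>. \<bar>Y \<omega>\<bar> \<partial>M))"
proof -
  interpret prob_space M by fact
  let ?u = "\<lambda>\<omega>. q\<^sup>2 * (B\<^sup>2 / 2 + B * \<bar>Y \<omega>\<bar>)"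
  have pointwise: "AE \<omega> in M. cmod (hfun q (Z \<omega>) - hfun q (Y \<omega>)) \<le> ?u \<omega>"
    using close
  proof eventually_elim
    case (elim \<omega>)
    have "\<bar>Z \<omega> - Y \<omega>\<bar>\<^sup>2 \<le> B\<^sup>2"
      using elim by (intro power_mono) auto
    then have "(q * (Z \<omega> - Y \<omega>))\<^sup>2 / 2 \<le> q\<^sup>2 * (B\<^sup>2 / 2)"
      by (simp add: power_mult_distrib mult_left_mono)
    moreover have "\<bar>Z \<omega> - Y \<omega>\<bar> * \<bar>Y \<omega>\<bar> \<le> B * \<bar>Y \<omega>\<bar>"
      using elim by (intro mult_right_mono) auto
    then have "q\<^sup>2 * (\<bar>Z \<omega> - Y \<omega>\<bar> * \<bar>Y \<omega>\<bar>) \<le> q\<^sup>2 * (B * \<bar>Y \<omega>\<bar>)"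
      by (rule mult_left_mono) simp
    moreover have "\<bar>q * (Z \<omega> - Y \<omega>)\<bar> * \<bar>q * Y \<omega>\<bar> = q\<^sup>2 * (\<bar>Z \<omega> - Y \<omega>\<bar> * \<bar>Y \<omega>\<bar>)"
      by (simp add: abs_mult power2_eq_square mult_ac)
    ultimately show ?case
      using norm_hfun_add_diff_le[of q "Y \<omega>" "Z \<omega> - Y \<omega>"] by (simp add: distrib_left)
  qed
  have "integrable M ?u"
    using assms(4) by auto
  show int: "integrable M (\<lambda>\<omega>. hfun q (Z \<omega>))"
  proof (rule Bochner_Integration.integrable_bound)
    show "integrable M (\<lambda>\<omega>. cmod (hfun q (Y \<omega>)) + ?u \<omega>)"
      using assms(5) \<open>integrable M ?u\<close> by auto
    show "AE \<omega> in M. norm (hfun q (Z \<omega>)) \<le> norm (cmod (hfun q (Y \<omega>)) + ?u \<omega>)"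
      using pointwise
    proof eventually_elim
      case (elim \<omega>)
      have "cmod (hfun q (Z \<omega>)) \<le> cmod (hfun q (Y \<omega>)) + cmod (hfun q (Z \<omega>) - hfun q (Y \<omega>))"
        by (metis norm_triangle_sub add.commute)
      also have "\<dots> \<le> norm (cmod (hfun q (Y \<omega>)) + ?u \<omega>)"
        using elim by simp
      finally show ?case .
    qed
  qed simp
  have "cmod ((\<integral>\<omega>. hfun q (Z \<omega>) \<partial>M) - (\<integral>\<omega>. hfun q (Y \<omega>) \<partial>M))
      \<le> (\<integral>\<omega>. cmod (hfun q (Z \<omega>) - hfun q (Y \<omega>)) \<partial>M)"
    using int assms(5) by (simp flip: Bochner_Integration.integral_diff add: integral_norm_bound)
  also have "\<dots> \<le> (\<integral>\<omega>. ?u \<omega> \<partial>M)"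
    using pointwise int assms(5) \<open>integrable M ?u\<close> by (intro integral_mono_AE) auto
  also have "\<dots> = q\<^sup>2 * (B\<^sup>2 / 2 + B * (\<integral>\<omega>. \<bar>Y \<omega>\<bar> \<partial>M))"
    using assms(4) by (simp add: prob_space)
  finally show "cmod ((\<integral>\<omega>. hfun q (Z \<omega>) \<partial>M) - (\<integral>\<omega>. hfun q (Y \<omega>) \<partial>M))
      \<le> q\<^sup>2 * (B\<^sup>2 / 2 + B * (\<integral>\<omega>. \<bar>Y \<omega>\<bar> \<partial>M))" .
qed

lemma borel_measurable_trans_prob:
  assumes "prob_space \<pi>" and "density_kernel \<pi> p" and "B \<in> sets \<pi>"
  shows "(\<lambda>w. trans_prob \<pi> p w B) \<in> borel_measurable \<pi>"
proof -
  interpret prob_space \<pi> by fact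
  have [measurable]: "(\<lambda>x. p (fst x) (snd x)) \<in> borel_measurable (\<pi> \<Otimes>\<^sub>M \<pi>)"
    using assms(2) by (simp add: density_kernel_def case_prod_beta')
  have "(\<lambda>(w, v). indicator B v * p w v) \<in> borel_measurable (\<pi> \<Otimes>\<^sub>M \<pi>)"
    using assms(3) by (simp add: case_prod_beta') measurable
  then show ?thesis
    unfolding trans_prob_def by (rule borel_measurable_lebesgue_integral)
qed

lemma borel_measurable_trans_op:
  assumes "prob_space \<pi>" and "density_kernel \<pi> p" and [measurable]: "f \<in> borel_measurable \<pi>"
  shows "trans_op \<pi> p f \<in> borel_measurable \<pi>"
proof -
  interpret prob_space \<pi> by fact
  have [measurable]: "(\<lambda>x. p (fst x) (snd x)) \<in> borel_measurable (\<pi> \<Otimes>\<^sub>M \<pi>)"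
    using assms(2) by (simp add: density_kernel_def case_prod_beta')
  have "(\<lambda>(w, v). p w v * f v) \<in> borel_measurable (\<pi> \<Otimes>\<^sub>M \<pi>)"
    by (simp add: case_prod_beta') measurable
  then have "(\<lambda>w. \<integral>v. p w v * f v \<partial>\<pi>) \<in> borel_measurable \<pi>"
    by (rule borel_measurable_lebesgue_integral)
  then show ?thesis
    by (simp add: trans_op_def[abs_def])
qed

lemma distr_markov_chain_1:
  assumes chain: "markov_chain M \<xi> \<pi> p" and "invariant_measure \<pi> p"
    and "density_kernel \<pi> p" and "prob_space \<pi>"
  shows "distr M \<pi> (\<xi> 1) = \<pi>"
proof (rule measure_eqI)
  interpret M: prob_space M
    using chain by (simp add: markov_chain_def)
  interpret prob_space \<pi> by fact
  have \<xi>: "\<xi> n \<in> M \<rightarrow>\<^sub>M \<pi>" for n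
    using chain by (simp add: markov_chain_def)
  fix B assume "B \<in> sets (distr M \<pi> (\<xi> 1))"
  then have B: "B \<in> sets \<pi>"
    by simp
  have space_0: "\<xi> 0 \<omega> \<in> space \<pi>" if "\<omega> \<in> space M" for \<omega>
    using \<xi>[of 0] that by (auto simp: measurable_def)
  have "measure M {\<omega> \<in> space M. (\<forall>i\<le>0. \<xi> i \<omega> \<in> space \<pi>) \<and> \<xi> (Suc 0) \<omega> \<in> B}
      = (\<integral>\<omega>. indicator {\<omega> \<in> space M. \<forall>i\<le>0. \<xi> i \<omega> \<in> space \<pi>} \<omega> * trans_prob \<pi> p (\<xi> 0 \<omega>) B \<partial>M)"
    using chain B unfolding markov_chain_def by (auto dest!: spec[of _ 0] spec[of _ "\<lambda>i. space \<pi>"])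
  also have "\<dots> = (\<integral>\<omega>. trans_prob \<pi> p (\<xi> 0 \<omega>) B \<partial>M)"
    using space_0 by (intro Bochner_Integration.integral_cong) (auto simp: indicator_def)
  also have "\<dots> = (\<integral>w. trans_prob \<pi> p w B \<partial>distr M \<pi> (\<xi> 0))"
    using borel_measurable_trans_prob[OF assms(4,3) B] by (simp add: integral_distr \<xi>)
  also have "\<dots> = measure \<pi> B"
    using chain assms(2) B by (simp add: markov_chain_def invariant_measure_def)
  also have "{\<omega> \<in> space M. (\<forall>i\<le>0. \<xi> i \<omega> \<in> space \<pi>) \<and> \<xi> (Suc 0) \<omega> \<in> B} = \<xi> 1 -` B \<inter> space M"
    using space_0 by auto
  finally have "measure M (\<xi> 1 -` B \<inter> space M) = measure \<pi> B" .
  then show "emeasure (distr M \<pi> (\<xi> 1)) B = emeasure \<pi> B"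
    using B \<xi> by (simp add: emeasure_distr M.emeasure_eq_measure emeasure_eq_measure)
qed simp

lemma trans_op_AE_bounded:
  assumes "prob_space \<pi>" and kernel: "density_kernel \<pi> p" and "integrable \<pi> f"
  shows "\<exists>K\<ge>0. AE w in \<pi>. \<bar>trans_op \<pi> p f w\<bar> \<le> K"
proof -
  interpret prob_space \<pi> by fact
  interpret pair_sigma_finite \<pi> \<pi>
    by (simp add: pair_sigma_finite_def prob_space_imp_sigma_finite assms(1))
  obtain B where "AE x in \<pi> \<Otimes>\<^sub>M \<pi>. case x of (w, v) \<Rightarrow> p w v \<le> B"
    using kernel by (auto simp: density_kernel_def)
  then have "AE w in \<pi>. AE v in \<pi>. p w v \<le> max B 0"
    using AE_pair by (force elim!: AE_mp)
  then have "AE w in \<pi>. \<bar>trans_op \<pi> p f w\<bar> \<le> max B 0 * (\<integral>v. \<bar>f v\<bar> \<partial>\<pi>)"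
  proof eventually_elim
    case (elim w)
    show ?case
    proof (cases "integrable \<pi> (\<lambda>v. p w v * f v)")
      case True
      have "\<bar>trans_op \<pi> p f w\<bar> \<le> (\<integral>v. \<bar>p w v * f v\<bar> \<partial>\<pi>)"
        unfolding trans_op_def by (rule integral_abs_bound)
      also have "\<dots> \<le> (\<integral>v. max B 0 * \<bar>f v\<bar> \<partial>\<pi>)"
      proof (rule integral_mono_AE)
        show "integrable \<pi> (\<lambda>v. \<bar>p w v * f v\<bar>)"
          using True by auto
        show "integrable \<pi> (\<lambda>v. max B 0 * \<bar>f v\<bar>)"
          using assms(3) by auto
        show "AE v in \<pi>. \<bar>p w v * f v\<bar> \<le> max B 0 * \<bar>f v\<bar>"
          using elim by eventually_elim (use kernel in \<open>auto simp: abs_mult density_kernel_def intro!: mult_right_mono\<close>)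
      qed
      finally show ?thesis
        by simp
    qed (simp add: trans_op_def not_integrable_integral_eq)
  qed
  then show ?thesis
    by (intro exI[of _ "max B 0 * (\<integral>v. \<bar>f v\<bar> \<partial>\<pi>)"]) auto
qed

lemma AE_markov_chain_increment_close:
  assumes "prob_space \<pi>" and kernel: "density_kernel \<pi> p"
    and chain: "markov_chain M \<xi> \<pi> p" and "invariant_measure \<pi> p"
    and "integrable \<pi> f" and eq: "AE w in \<pi>. f w - trans_op \<pi> p f w = g w"
  shows "\<exists>K\<ge>0. AE \<omega> in M. \<bar>(f (\<xi> 1 \<omega>) - trans_op \<pi> p f (\<xi> 0 \<omega>)) - g (\<xi> 1 \<omega>)\<bar> \<le> K"
proof -
  have \<xi>: "\<xi> n \<in> M \<rightarrow>\<^sub>M \<pi>" and distr_0: "distr M \<pi> (\<xi> 0) = \<pi>" for n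
    using chain by (auto simp: markov_chain_def)
  have distr_1: "distr M \<pi> (\<xi> 1) = \<pi>"
    using assms by (intro distr_markov_chain_1)
  have AE_chain: "AE \<omega> in M. P (\<xi> n \<omega>)" if "AE w in \<pi>. P w" "distr M \<pi> (\<xi> n) = \<pi>" for P n
  proof (rule AE_distrD[OF \<xi>])
    show "AE w in distr M \<pi> (\<xi> n). P w"
      unfolding that(2) by (rule that(1))
  qed
  obtain K where "K \<ge> 0" and K: "AE w in \<pi>. \<bar>trans_op \<pi> p f w\<bar> \<le> K"
    using trans_op_AE_bounded[OF assms(1) kernel assms(5)] by blast
  have "AE \<omega> in M. \<bar>(f (\<xi> 1 \<omega>) - trans_op \<pi> p f (\<xi> 0 \<omega>)) - g (\<xi> 1 \<omega>)\<bar> \<le> 2 * K"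
    using AE_chain[OF eq distr_1] AE_chain[OF K distr_0] AE_chain[OF K distr_1]
    by eventually_elim auto
  then show ?thesis
    using \<open>K \<ge> 0\<close> by (intro exI[of _ "2 * K"]) auto
qed

lemma norm_expectation_hfun_law_perturb_le:
  fixes \<pi> :: "'a measure" and \<Psi> :: "'a \<Rightarrow> real" and M :: "'b measure" and \<eta> :: "'b \<Rightarrow> 'a"
    and X :: "'b \<Rightarrow> real" and A K :: real
  assumes [measurable]: "\<Psi> \<in> borel_measurable \<pi>" and "integrable \<pi> \<Psi>"
    and "integrable \<pi> (\<lambda>v. hfun q (A * \<Psi> v))" and "0 \<le> A"
    and "prob_space M" and \<eta> [measurable]: "\<eta> \<in> M \<rightarrow>\<^sub>M \<pi>" and law: "distr M \<pi> \<eta> = \<pi>"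
    and [measurable]: "X \<in> borel_measurable M" and close: "AE \<omega> in M. \<bar>X \<omega> - \<Psi> (\<eta> \<omega>)\<bar> \<le> K"
  shows "cmod ((\<integral>\<omega>. hfun q (A * X \<omega>) \<partial>M) - (\<integral>v. hfun q (A * \<Psi> v) \<partial>\<pi>))
    \<le> q\<^sup>2 * A\<^sup>2 * (K\<^sup>2 / 2 + K * (\<integral>v. \<bar>\<Psi> v\<bar> \<partial>\<pi>))"
proof -
  have lift: "(\<integral>\<omega>. f (\<eta> \<omega>) \<partial>M) = (\<integral>v. f v \<partial>\<pi>)" "integrable M (\<lambda>\<omega>. f (\<eta> \<omega>)) \<longleftrightarrow> integrable \<pi> f"
    if [measurable]: "f \<in> borel_measurable \<pi>" for f :: "'a \<Rightarrow> 'c::{banach, second_countable_topology}"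
    using integral_distr[OF \<eta> that] integrable_distr_eq[OF \<eta> that] by (simp_all add: law)
  have "AE \<omega> in M. \<bar>A * X \<omega> - A * \<Psi> (\<eta> \<omega>)\<bar> \<le> A * K"
    using close by eventually_elim (use \<open>0 \<le> A\<close> in \<open>simp add: abs_mult mult_left_mono flip: right_diff_distrib\<close>)
  moreover have "integrable M (\<lambda>\<omega>. A * \<Psi> (\<eta> \<omega>))"
    using lift(2)[of "\<lambda>v. A * \<Psi> v"] assms(2) by simp
  moreover have "integrable M (\<lambda>\<omega>. hfun q (A * \<Psi> (\<eta> \<omega>)))"
    using lift(2)[of "\<lambda>v. hfun q (A * \<Psi> v)"] assms(3) by simp
  ultimately have "cmod ((\<integral>\<omega>. hfun q (A * X \<omega>) \<partial>M) - (\<integral>\<omega>. hfun q (A * \<Psi> (\<eta> \<omega>)) \<partial>M))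
      \<le> q\<^sup>2 * ((A * K)\<^sup>2 / 2 + A * K * (\<integral>\<omega>. \<bar>A * \<Psi> (\<eta> \<omega>)\<bar> \<partial>M))"
    by (intro norm_expectation_hfun_perturb_le(2)[OF \<open>prob_space M\<close>]) simp_all
  moreover have "(\<integral>\<omega>. \<bar>A * \<Psi> (\<eta> \<omega>)\<bar> \<partial>M) = A * (\<integral>v. \<bar>\<Psi> v\<bar> \<partial>\<pi>)"
    using lift(1)[of "\<lambda>v. \<bar>A * \<Psi> v\<bar>"] \<open>0 \<le> A\<close> by (simp add: abs_mult)
  moreover have "(\<integral>\<omega>. hfun q (A * \<Psi> (\<eta> \<omega>)) \<partial>M) = (\<integral>v. hfun q (A * \<Psi> v) \<partial>\<pi>)"
    using lift(1)[of "\<lambda>v. hfun q (A * \<Psi> v)"] by simp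
  ultimately show ?thesis
    by (simp add: algebra_simps power2_eq_square)
qed

lemma norm_scaled_hfun_expectation_add_psi_perturb_le:
  fixes \<pi> :: "'a measure" and \<Psi> :: "'a \<Rightarrow> real" and M :: "'b measure" and \<eta> :: "'b \<Rightarrow> 'a"
    and X :: "'b \<Rightarrow> real" and N K \<alpha> \<alpha>\<^sub>1 cp cm C\<^sub>s :: real
  assumes "prob_space \<pi>" and [measurable]: "\<Psi> \<in> borel_measurable \<pi>" and "integrable \<pi> \<Psi>"
    and a: "1 < \<alpha>" "\<alpha> < 2" "0 < \<alpha>\<^sub>1" "\<alpha>\<^sub>1 < 2 - \<alpha>" "0 \<le> cp" "0 \<le> cm" "0 \<le> C\<^sub>s" "1 \<le> N" "0 \<le> K"
    and tails: "\<And>l. l \<ge> 1 \<Longrightarrow>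
        \<bar>measure \<pi> {v \<in> space \<pi>. \<Psi> v > l} - cp * l powr (-\<alpha>)\<bar>
        + \<bar>measure \<pi> {v \<in> space \<pi>. \<Psi> v < - l} - cm * l powr (-\<alpha>)\<bar>
        \<le> C\<^sub>s * l powr (-\<alpha> - \<alpha>\<^sub>1)"
    and "prob_space M" and "\<eta> \<in> M \<rightarrow>\<^sub>M \<pi>" and "distr M \<pi> \<eta> = \<pi>"
    and "X \<in> borel_measurable M" and "AE \<omega> in M. \<bar>X \<omega> - \<Psi> (\<eta> \<omega>)\<bar> \<le> K"
  shows "cmod (complex_of_real N * (\<integral>\<omega>. hfun q (N powr (-1/\<alpha>) * X \<omega>) \<partial>M) + psi_exp \<alpha> cp cm q)
    \<le> (K\<^sup>2 / 2 + K * (\<integral>v. \<bar>\<Psi> v\<bar> \<partial>\<pi>) + tail_error_const \<alpha> \<alpha>\<^sub>1 cp C\<^sub>s + tail_error_const \<alpha> \<alpha>\<^sub>1 cm C\<^sub>s)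
       * N powr (-\<alpha>\<^sub>1/\<alpha>) * (\<bar>q\<bar> * (1 + \<bar>q\<bar>))"
proof -
  define A where "A = N powr (-1/\<alpha>)"
  define C where "C = K\<^sup>2 / 2 + K * (\<integral>v. \<bar>\<Psi> v\<bar> \<partial>\<pi>)"
  define T where "T = tail_error_const \<alpha> \<alpha>\<^sub>1 cp C\<^sub>s + tail_error_const \<alpha> \<alpha>\<^sub>1 cm C\<^sub>s"
  define N' where "N' = N powr (-\<alpha>\<^sub>1/\<alpha>)"
  note main = norm_scaled_hfun_expectation_add_psi_le[OF assms(1,2) a(1-8) tails, where q=q]
  have perturb: "cmod ((\<integral>\<omega>. hfun q (A * X \<omega>) \<partial>M) - (\<integral>v. hfun q (A * \<Psi> v) \<partial>\<pi>)) \<le> q\<^sup>2 * A\<^sup>2 * C"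
    unfolding C_def using main(1) assms by (intro norm_expectation_hfun_law_perturb_le) (auto simp: A_def)
  have "(N * A\<^sup>2) * q\<^sup>2 \<le> N' * (\<bar>q\<bar> * (1 + \<bar>q\<bar>))"
  proof (rule mult_mono)
    show "N * A\<^sup>2 \<le> N'"
      using powr_1_minus_2_div_le[OF a(8), of \<alpha> \<alpha>\<^sub>1] mult_power2_powr_neg_inverse[of N \<alpha>] a
      by (simp add: A_def N'_def)
    show "q\<^sup>2 \<le> \<bar>q\<bar> * (1 + \<bar>q\<bar>)"
      by (simp add: algebra_simps power2_eq_square)
  qed (auto simp: N'_def)
  moreover have "0 \<le> C"
    using a(9) by (simp add: C_def)
  ultimately have "C * ((N * A\<^sup>2) * q\<^sup>2) \<le> C * (N' * (\<bar>q\<bar> * (1 + \<bar>q\<bar>)))"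
    by (rule mult_left_mono)
  then have "N * (q\<^sup>2 * A\<^sup>2 * C) \<le> C * N' * (\<bar>q\<bar> * (1 + \<bar>q\<bar>))"
    by (simp add: algebra_simps)
  have "complex_of_real N * (\<integral>\<omega>. hfun q (A * X \<omega>) \<partial>M) + psi_exp \<alpha> cp cm q
      = complex_of_real N * ((\<integral>\<omega>. hfun q (A * X \<omega>) \<partial>M) - (\<integral>v. hfun q (A * \<Psi> v) \<partial>\<pi>))
        + (complex_of_real N * (\<integral>v. hfun q (A * \<Psi> v) \<partial>\<pi>) + psi_exp \<alpha> cp cm q)"
    by (simp add: algebra_simps)
  also have "cmod \<dots> \<le> N * (q\<^sup>2 * A\<^sup>2 * C) + T * N' * (\<bar>q\<bar> * (1 + \<bar>q\<bar>))"
    using norm_triangle_le[OF add_mono[OF _ main(2)]] perturb a(8)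
    by (simp add: norm_mult A_def T_def N'_def mult_left_mono)
  also have "\<dots> \<le> C * N' * (\<bar>q\<bar> * (1 + \<bar>q\<bar>)) + T * N' * (\<bar>q\<bar> * (1 + \<bar>q\<bar>))"
    using \<open>N * (q\<^sup>2 * A\<^sup>2 * C) \<le> C * N' * (\<bar>q\<bar> * (1 + \<bar>q\<bar>))\<close> by simp
  finally show ?thesis
    by (simp add: A_def C_def T_def N'_def algebra_simps)
qed

lemma markov_chain_increment_psi_error:
  fixes \<pi> :: "'a measure" and p :: "'a \<Rightarrow> 'a \<Rightarrow> real" and M :: "'b measure" and \<xi> :: "nat \<Rightarrow> 'b \<Rightarrow> 'a"
    and \<Psi> chi :: "'a \<Rightarrow> real" and \<alpha> \<alpha>\<^sub>1 cp cm C\<^sub>s :: real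
  assumes "prob_space \<pi>" and kernel: "density_kernel \<pi> p"
    and chain: "markov_chain M \<xi> \<pi> p" and invariant: "invariant_measure \<pi> p"
    and [measurable]: "\<Psi> \<in> borel_measurable \<pi>" and "integrable \<pi> \<Psi>"
    and a: "1 < \<alpha>" "\<alpha> < 2" "0 < \<alpha>\<^sub>1" "\<alpha>\<^sub>1 < 2 - \<alpha>" "0 \<le> cp" "0 \<le> cm" "0 \<le> C\<^sub>s"
    and tails: "\<And>l. l \<ge> 1 \<Longrightarrow>
        \<bar>measure \<pi> {v \<in> space \<pi>. \<Psi> v > l} - cp * l powr (-\<alpha>)\<bar>
        + \<bar>measure \<pi> {v \<in> space \<pi>. \<Psi> v < - l} - cm * l powr (-\<alpha>)\<bar>
        \<le> C\<^sub>s * l powr (-\<alpha> - \<alpha>\<^sub>1)"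
    and [measurable]: "chi \<in> borel_measurable \<pi>" and "integrable \<pi> chi"
    and poisson: "AE w in \<pi>. chi w - trans_op \<pi> p chi w = \<Psi> w"
  shows "\<exists>C>0. \<forall>q::real. \<forall>N::nat. N \<ge> 1 \<longrightarrow>
      cmod (- of_nat N * (\<integral>\<omega>. hfun q (real N powr (-1/\<alpha>) * (chi (\<xi> 1 \<omega>) - trans_op \<pi> p chi (\<xi> 0 \<omega>))) \<partial>M)
        - psi_exp \<alpha> cp cm q)
      \<le> C / real N powr (\<alpha>\<^sub>1 / \<alpha>) * \<bar>q\<bar> * (1 + \<bar>q\<bar>)"
proof -
  have "prob_space M" and [measurable]: "\<xi> n \<in> M \<rightarrow>\<^sub>M \<pi>" for n
    using chain by (auto simp: markov_chain_def)
  have [measurable]: "trans_op \<pi> p chi \<in> borel_measurable \<pi>"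
    using assms(1) kernel by (rule borel_measurable_trans_op) measurable
  obtain K where "K \<ge> 0"
    and close: "AE \<omega> in M. \<bar>(chi (\<xi> 1 \<omega>) - trans_op \<pi> p chi (\<xi> 0 \<omega>)) - \<Psi> (\<xi> 1 \<omega>)\<bar> \<le> K"
    using AE_markov_chain_increment_close[OF assms(1) kernel chain invariant _ poisson] assms by blast
  define C where "C = K\<^sup>2 / 2 + K * (\<integral>v. \<bar>\<Psi> v\<bar> \<partial>\<pi>)
    + tail_error_const \<alpha> \<alpha>\<^sub>1 cp C\<^sub>s + tail_error_const \<alpha> \<alpha>\<^sub>1 cm C\<^sub>s"
  have "0 \<le> C"
    unfolding C_def using a \<open>K \<ge> 0\<close> by (intro add_nonneg_nonneg tail_error_const_nonneg) auto
  show ?thesis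
  proof (intro exI[of _ "C + 1"] conjI allI impI)
    fix q :: real and N :: nat
    assume "1 \<le> N"
    let ?E = "\<integral>\<omega>. hfun q (real N powr (-1/\<alpha>) * (chi (\<xi> 1 \<omega>) - trans_op \<pi> p chi (\<xi> 0 \<omega>))) \<partial>M"
    have "- of_nat N * ?E - psi_exp \<alpha> cp cm q = - (complex_of_real N * ?E + psi_exp \<alpha> cp cm q)"
      by simp
    then have "cmod (- of_nat N * ?E - psi_exp \<alpha> cp cm q) = cmod (complex_of_real N * ?E + psi_exp \<alpha> cp cm q)"
      by (simp only: norm_minus_cancel)
    also have "\<dots> \<le> C * real N powr (-\<alpha>\<^sub>1/\<alpha>) * (\<bar>q\<bar> * (1 + \<bar>q\<bar>))"
      unfolding C_def using \<open>1 \<le> N\<close>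
      by (intro norm_scaled_hfun_expectation_add_psi_perturb_le[OF assms(1,5,6) a _ \<open>K \<ge> 0\<close> tails
          \<open>prob_space M\<close> _ distr_markov_chain_1[OF chain invariant kernel assms(1)] _ close]) simp_all
    also have "\<dots> = C * (\<bar>q\<bar> * (1 + \<bar>q\<bar>)) / real N powr (\<alpha>\<^sub>1 / \<alpha>)"
      by (simp add: powr_minus_divide)
    also have "\<dots> \<le> (C + 1) * (\<bar>q\<bar> * (1 + \<bar>q\<bar>)) / real N powr (\<alpha>\<^sub>1 / \<alpha>)"
      by (intro divide_right_mono mult_right_mono) auto
    also have "\<dots> = (C + 1) / real N powr (\<alpha>\<^sub>1 / \<alpha>) * \<bar>q\<bar> * (1 + \<bar>q\<bar>)"
      by simp
    finally show "cmod (- of_nat N * (\<integral>\<omega>. hfun q (real N powr (-1/\<alpha>) * (chi (\<xi> 1 \<omega>) - trans_op \<pi> p chi (\<xi> 0 \<omega>))) \<partial>M)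
        - psi_exp \<alpha> cp cm q) \<le> (C + 1) / real N powr (\<alpha>\<^sub>1 / \<alpha>) * \<bar>q\<bar> * (1 + \<bar>q\<bar>)" .
  qed (use \<open>0 \<le> C\<close> in simp)
qed

section \<open>Fractional moments of shifted jumps\<close>

lemma measure_abs_greater_le_powr:
  fixes \<pi> :: "'a measure" and \<Psi> :: "'a \<Rightarrow> real" and \<alpha> \<alpha>\<^sub>1 cp cm C\<^sub>s t :: real
  assumes "prob_space \<pi>" and [measurable]: "\<Psi> \<in> borel_measurable \<pi>"
    and "0 \<le> \<alpha>" "0 \<le> \<alpha>\<^sub>1" "0 \<le> cp" "0 \<le> cm" "0 \<le> C\<^sub>s"
    and tails: "\<And>l. l \<ge> 1 \<Longrightarrow>
        \<bar>measure \<pi> {v \<in> space \<pi>. \<Psi> v > l} - cp * l powr (-\<alpha>)\<bar>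
        + \<bar>measure \<pi> {v \<in> space \<pi>. \<Psi> v < - l} - cm * l powr (-\<alpha>)\<bar>
        \<le> C\<^sub>s * l powr (-\<alpha> - \<alpha>\<^sub>1)"
    and "0 < t"
  shows "measure \<pi> {v \<in> space \<pi>. t < \<bar>\<Psi> v\<bar>} \<le> (1 + cp + cm + C\<^sub>s) * t powr (-\<alpha>)"
proof (cases "t < 1")
  case True
  interpret prob_space \<pi> by fact
  have "t powr \<alpha> \<le> 1"
    using True assms powr_mono2[of \<alpha> t 1] by simp
  then have "1 \<le> t powr (-\<alpha>)"
    using assms by (simp add: powr_minus field_simps)
  moreover have "measure \<pi> {v \<in> space \<pi>. t < \<bar>\<Psi> v\<bar>} \<le> 1"
    by simp
  ultimately show ?thesis
    using assms by (smt (verit) mult_le_cancel_right1)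
next
  case False
  interpret prob_space \<pi> by fact
  have "{v \<in> space \<pi>. t < \<bar>\<Psi> v\<bar>} = {v \<in> space \<pi>. \<Psi> v > t} \<union> {v \<in> space \<pi>. \<Psi> v < - t}"
    by auto
  then have "measure \<pi> {v \<in> space \<pi>. t < \<bar>\<Psi> v\<bar>}
      \<le> measure \<pi> {v \<in> space \<pi>. \<Psi> v > t} + measure \<pi> {v \<in> space \<pi>. \<Psi> v < - t}"
    by (simp add: measure_Un_le)
  also have "\<dots> \<le> cp * t powr (-\<alpha>) + cm * t powr (-\<alpha>) + C\<^sub>s * t powr (-\<alpha> - \<alpha>\<^sub>1)"
    using tails[of t] False by linarith
  also have "C\<^sub>s * t powr (-\<alpha> - \<alpha>\<^sub>1) \<le> C\<^sub>s * t powr (-\<alpha>)"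
    using False assms by (intro mult_left_mono powr_mono) auto
  finally show ?thesis
    by (simp add: algebra_simps add_increasing)
qed

definition min_powr :: "real \<Rightarrow> real \<Rightarrow> real" where
  "min_powr \<beta> w = min (w powr \<beta>) (w powr (2 * \<beta>))"

lemma min_powr_nonneg: "0 \<le> min_powr \<beta> w"
  by (simp add: min_powr_def)

lemma min_powr_mono: "0 \<le> \<beta> \<Longrightarrow> 0 \<le> y \<Longrightarrow> y \<le> z \<Longrightarrow> min_powr \<beta> y \<le> min_powr \<beta> z"
  unfolding min_powr_def by (intro min.mono powr_mono2) auto

lemma min_powr_double:
  assumes "0 \<le> \<beta>" "0 \<le> w"
  shows "min_powr \<beta> (2 * w) \<le> 4 powr \<beta> * min_powr \<beta> w"
proof -
  have "(2 * w) powr \<beta> \<le> 4 powr \<beta> * w powr \<beta>"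
    using assms by (simp add: powr_mult) (intro mult_right_mono powr_mono2, auto)
  moreover have "(2 * w) powr (2 * \<beta>) = 4 powr \<beta> * w powr (2 * \<beta>)"
    using assms by (simp add: powr_mult powr_powr[symmetric])
  ultimately have "min_powr \<beta> (2 * w) \<le> min (4 powr \<beta> * w powr \<beta>) (4 powr \<beta> * w powr (2 * \<beta>))"
    unfolding min_powr_def by (intro min.mono) auto
  then show ?thesis
    by (simp add: min_powr_def min_mult_distrib_left)
qed

lemma min_powr_add:
  assumes "0 \<le> \<beta>" "0 \<le> y" "0 \<le> z"
  shows "min_powr \<beta> (y + z) \<le> 4 powr \<beta> * (min_powr \<beta> y + min_powr \<beta> z)"
proof -
  have "min_powr \<beta> (y + z) \<le> min_powr \<beta> (2 * max y z)"
    using assms by (intro min_powr_mono) auto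
  also have "\<dots> \<le> 4 powr \<beta> * min_powr \<beta> (max y z)"
    using assms by (intro min_powr_double) auto
  also have "min_powr \<beta> (max y z) \<le> min_powr \<beta> y + min_powr \<beta> z"
    using min_powr_nonneg[of \<beta> y] min_powr_nonneg[of \<beta> z] by (cases "y \<le> z") (auto simp: max_def)
  finally show ?thesis
    by (simp add: mult_left_mono)
qed

lemma min_powr_le_powr:
  assumes "\<beta> \<le> \<alpha>" "\<alpha> \<le> 2 * \<beta>" "0 \<le> w"
  shows "min_powr \<beta> w \<le> w powr \<alpha>"
proof (cases "w \<le> 1")
  case True
  then have "w powr (2 * \<beta>) \<le> w powr \<alpha>"
    using assms by (cases "w = 0") (auto intro: powr_mono')
  then show ?thesis
    by (simp add: min_powr_def)
next
  case False
  then have "w powr \<beta> \<le> w powr \<alpha>"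
    using assms by (intro powr_mono) auto
  then show ?thesis
    by (simp add: min_powr_def)
qed

lemma norm_hfun_powr_le_min_powr:
  assumes "0 \<le> \<beta>"
  shows "cmod (hfun q x) powr \<beta> \<le> 2 powr \<beta> * min_powr \<beta> \<bar>q * x\<bar>"
proof -
  have linear: "cmod (hfun q x) powr \<beta> \<le> (2 * \<bar>q * x\<bar>) powr \<beta>"
    using assms by (intro powr_mono2 norm_hfun_le) auto
  have "cmod (hfun q x) \<le> (q * x)\<^sup>2 / 2"
    by (rule norm_hfun_le(1))
  also have "\<dots> \<le> 2 * \<bar>q * x\<bar> powr 2"
    by (simp add: powr_numeral)
  finally have quadratic: "cmod (hfun q x) powr \<beta> \<le> (2 * \<bar>q * x\<bar> powr 2) powr \<beta>"
    using assms by (intro powr_mono2) auto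
  have "(2 * \<bar>q * x\<bar> powr 2) powr \<beta> = 2 powr \<beta> * (\<bar>q * x\<bar> powr 2) powr \<beta>"
    by (rule powr_mult)
  also have "(\<bar>q * x\<bar> powr 2) powr \<beta> = \<bar>q * x\<bar> powr (2 * \<beta>)"
    by (rule powr_powr)
  finally have "(2 * \<bar>q * x\<bar> powr 2) powr \<beta> = 2 powr \<beta> * \<bar>q * x\<bar> powr (2 * \<beta>)" .
  then show ?thesis
    using linear quadratic by (simp add: min_powr_def powr_mult min_mult_distrib_left)
qed

lemma min_powr_div_eq:
  assumes "0 < s" "0 < t"
  shows "min_powr \<beta> (s * t) / t = s * min ((s * t) powr (2 * \<beta> - 1)) ((s * t) powr (\<beta> - 1))"
proof -
  have "min_powr \<beta> (s * t) = s * t * min ((s * t) powr (2 * \<beta> - 1)) ((s * t) powr (\<beta> - 1))"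
    using assms by (simp add: min_powr_def min_mult_distrib_left powr_diff min.commute)
  then show ?thesis
    using assms by simp
qed

lemma min_powr_div_mono:
  assumes "1 \<le> \<beta>" "0 < s" "0 < t" "t \<le> u"
  shows "min_powr \<beta> (s * t) / t \<le> min_powr \<beta> (s * u) / u"
proof -
  have "min ((s * t) powr (2 * \<beta> - 1)) ((s * t) powr (\<beta> - 1)) \<le> min ((s * u) powr (2 * \<beta> - 1)) ((s * u) powr (\<beta> - 1))"
    using assms by (intro min.mono powr_mono2) auto
  then show ?thesis
    using assms by (simp add: min_powr_div_eq mult_left_mono)
qed

text \<open>Doubling the argument costs a factor \<open>4 powr \<beta>\<close>, and \<open>min_powr \<beta> (s * t) / t\<close> is
  increasing, so its integral over \<open>(y/2, y)\<close> dominates \<open>min_powr \<beta> (s * y/2)\<close>; this replaces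
  differentiating \<open>min_powr\<close> in the layer-cake argument.\<close>

lemma min_powr_le_nn_integral:
  assumes "1 \<le> \<beta>" "0 < s" "0 \<le> y"
  shows "ennreal (min_powr \<beta> (s * y))
    \<le> ennreal (4 powr \<beta>) * (\<integral>\<^sup>+t. (if 0 < t \<and> t < y then ennreal (min_powr \<beta> (s * t) / t) else 0) \<partial>lborel)"
proof (cases "y = 0")
  case False
  then have "0 < y"
    using assms by simp
  have "min_powr \<beta> (s * y) \<le> 4 powr \<beta> * min_powr \<beta> (s * (y / 2))"
    using min_powr_double[of \<beta> "s * (y / 2)"] assms by simp
  also have "min_powr \<beta> (s * (y / 2)) = min_powr \<beta> (s * (y / 2)) / (y / 2) * (y / 2)"
    using \<open>0 < y\<close> by simp
  finally have "ennreal (min_powr \<beta> (s * y))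
      \<le> ennreal (4 powr \<beta>) * (ennreal (min_powr \<beta> (s * (y / 2)) / (y / 2)) * ennreal (y / 2))"
    using \<open>0 < y\<close> min_powr_nonneg by (simp add: ennreal_mult[symmetric] ennreal_leI del: ennreal_mult')
  also have "ennreal (min_powr \<beta> (s * (y / 2)) / (y / 2)) * ennreal (y / 2)
      = (\<integral>\<^sup>+t. ennreal (min_powr \<beta> (s * (y / 2)) / (y / 2)) * indicator {y/2<..<y} t \<partial>lborel)"
    using \<open>0 < y\<close> by (simp add: nn_integral_cmult_indicator)
  also have "\<dots> \<le> (\<integral>\<^sup>+t. (if 0 < t \<and> t < y then ennreal (min_powr \<beta> (s * t) / t) else 0) \<partial>lborel)"
  proof (intro nn_integral_mono)
    fix t
    show "ennreal (min_powr \<beta> (s * (y / 2)) / (y / 2)) * indicator {y/2<..<y} t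
        \<le> (if 0 < t \<and> t < y then ennreal (min_powr \<beta> (s * t) / t) else 0)"
    proof (cases "y / 2 < t \<and> t < y")
      case True
      then have "ennreal (min_powr \<beta> (s * (y / 2)) / (y / 2)) \<le> ennreal (min_powr \<beta> (s * t) / t)"
        using \<open>0 < y\<close> assms by (intro ennreal_leI min_powr_div_mono) auto
      then show ?thesis
        using True \<open>0 < y\<close> by simp
    qed simp
  qed
  finally show ?thesis
    by (simp add: mult_left_mono)
qed (simp add: min_powr_def)

lemma min_powr_div_le:
  assumes "0 < s" "0 < t"
  shows "min_powr \<beta> (s * t) / t \<le> s powr (2 * \<beta>) * t powr (2 * \<beta> - 1)"
    and "min_powr \<beta> (s * t) / t \<le> s powr \<beta> * t powr (\<beta> - 1)"
  using assms by (auto simp: min_powr_def powr_mult powr_diff divide_right_mono intro: min.coboundedI1 min.coboundedI2)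

lemma nn_integral_min_powr_div_tail_le:
  fixes \<alpha> \<beta> s K :: real
  assumes "\<beta> < \<alpha>" "\<alpha> < 2 * \<beta>" "0 < s" "0 \<le> K"
  shows "(\<integral>\<^sup>+t. ennreal (min_powr \<beta> (s * t) / t * (K * t powr (-\<alpha>))) * indicator {0<..} t \<partial>lborel)
    \<le> ennreal (K * s powr \<alpha> * (1 / (2 * \<beta> - \<alpha>) + 1 / (\<alpha> - \<beta>)))"
proof -
  have "ennreal (min_powr \<beta> (s * t) / t * (K * t powr (-\<alpha>))) * indicator {0<..} t
      \<le> ennreal (K * s powr (2 * \<beta>) * t powr (2 * \<beta> - 1 - \<alpha>)) * indicator {0..1/s} t
        + ennreal (K * s powr \<beta> * t powr (\<beta> - 1 - \<alpha>)) * indicator {1/s..} t" for t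
  proof (cases "0 < t")
    case True
    show ?thesis
    proof (cases "t \<le> 1/s")
      case small: True
      have "min_powr \<beta> (s * t) / t * (K * t powr (-\<alpha>)) \<le> s powr (2 * \<beta>) * t powr (2 * \<beta> - 1) * (K * t powr (-\<alpha>))"
        using assms True by (intro mult_right_mono min_powr_div_le) auto
      also have "\<dots> = K * s powr (2 * \<beta>) * t powr (2 * \<beta> - 1 - \<alpha>)"
        using True by (simp add: powr_diff powr_minus divide_inverse)
      finally show ?thesis
        using True small by (simp add: ennreal_leI add_increasing2)
    next
      case large: False
      have "min_powr \<beta> (s * t) / t * (K * t powr (-\<alpha>)) \<le> s powr \<beta> * t powr (\<beta> - 1) * (K * t powr (-\<alpha>))"
        using assms True by (intro mult_right_mono min_powr_div_le) auto
      also have "\<dots> = K * s powr \<beta> * t powr (\<beta> - 1 - \<alpha>)"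
        using True by (simp add: powr_diff powr_minus divide_inverse)
      finally show ?thesis
        using True large by (simp add: ennreal_leI add_increasing)
    qed
  qed simp
  then have "(\<integral>\<^sup>+t. ennreal (min_powr \<beta> (s * t) / t * (K * t powr (-\<alpha>))) * indicator {0<..} t \<partial>lborel)
      \<le> (\<integral>\<^sup>+t. ennreal (K * s powr (2 * \<beta>) * t powr (2 * \<beta> - 1 - \<alpha>)) * indicator {0..1/s} t \<partial>lborel)
        + (\<integral>\<^sup>+t. ennreal (K * s powr \<beta> * t powr (\<beta> - 1 - \<alpha>)) * indicator {1/s..} t \<partial>lborel)"
    by (subst nn_integral_add[symmetric]) (auto intro!: nn_integral_mono)
  also have "\<dots> = ennreal (K * s powr (2 * \<beta>) * ((1/s) powr (2 * \<beta> - \<alpha>) / (2 * \<beta> - \<alpha>)))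
      + ennreal (K * s powr \<beta> * ((1/s) powr (\<beta> - \<alpha>) / (\<alpha> - \<beta>)))"
    using assms nn_integral_powr_atLeastAtMost_0[of "1/s" "2 * \<beta> - 1 - \<alpha>" "K * s powr (2 * \<beta>)"]
      nn_integral_powr_atLeast[of "1/s" "\<beta> - 1 - \<alpha>" "K * s powr \<beta>"]
    by simp
  also have "\<dots> = ennreal (K * s powr \<alpha> * (1 / (2 * \<beta> - \<alpha>) + 1 / (\<alpha> - \<beta>)))"
    using assms by (simp add: powr_divide powr_diff ennreal_plus[symmetric] distrib_left del: ennreal_plus)
  finally show ?thesis .
qed

lemma nn_integral_min_powr_le:
  fixes \<pi> :: "'a measure" and \<Psi> :: "'a \<Rightarrow> real" and \<alpha> \<beta> s K :: real
  assumes "prob_space \<pi>" and [measurable]: "\<Psi> \<in> borel_measurable \<pi>"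
    and "1 \<le> \<beta>" "\<beta> < \<alpha>" "\<alpha> < 2 * \<beta>" "0 \<le> K" "0 < s"
    and tail: "\<And>t. 0 < t \<Longrightarrow> measure \<pi> {v \<in> space \<pi>. t < \<bar>\<Psi> v\<bar>} \<le> K * t powr (-\<alpha>)"
  shows "(\<integral>\<^sup>+v. ennreal (min_powr \<beta> (s * \<bar>\<Psi> v\<bar>)) \<partial>\<pi>)
    \<le> ennreal (4 powr \<beta> * (K * s powr \<alpha> * (1 / (2 * \<beta> - \<alpha>) + 1 / (\<alpha> - \<beta>))))"
proof -
  interpret prob_space \<pi> by fact
  interpret pair_sigma_finite \<pi> "lborel :: real measure"
    by (simp add: pair_sigma_finite_def lborel.sigma_finite_measure_axioms prob_space_imp_sigma_finite assms(1))
  let ?g = "\<lambda>t. min_powr \<beta> (s * t) / t"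
  have [measurable]: "?g \<in> borel_measurable borel"
    unfolding min_powr_def by measurable
  have inner: "(\<integral>\<^sup>+v. (if 0 < t \<and> t < \<bar>\<Psi> v\<bar> then ennreal (?g t) else 0) \<partial>\<pi>)
      \<le> ennreal (?g t * (K * t powr (-\<alpha>))) * indicator {0<..} t" for t
  proof (cases "0 < t")
    case True
    have "(\<integral>\<^sup>+v. (if 0 < t \<and> t < \<bar>\<Psi> v\<bar> then ennreal (?g t) else 0) \<partial>\<pi>)
        = ennreal (?g t) * emeasure \<pi> {v \<in> space \<pi>. t < \<bar>\<Psi> v\<bar>}"
      using True by (subst nn_integral_cmult_indicator[symmetric]) (auto intro!: nn_integral_cong simp: indicator_def)
    also have "\<dots> = ennreal (?g t * measure \<pi> {v \<in> space \<pi>. t < \<bar>\<Psi> v\<bar>})"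
      unfolding emeasure_eq_measure using True min_powr_nonneg[of \<beta> "s * t"]
      by (intro ennreal_mult[symmetric]) auto
    also have "\<dots> \<le> ennreal (?g t * (K * t powr (-\<alpha>)))"
      using True tail[OF True] min_powr_nonneg[of \<beta> "s * t"] by (intro ennreal_leI mult_left_mono) auto
    finally show ?thesis
      using True by simp
  qed simp
  have "(\<integral>\<^sup>+v. ennreal (min_powr \<beta> (s * \<bar>\<Psi> v\<bar>)) \<partial>\<pi>)
      \<le> (\<integral>\<^sup>+v. ennreal (4 powr \<beta>) * (\<integral>\<^sup>+t. (if 0 < t \<and> t < \<bar>\<Psi> v\<bar> then ennreal (?g t) else 0) \<partial>lborel) \<partial>\<pi>)"
    using assms by (intro nn_integral_mono min_powr_le_nn_integral) auto
  also have "\<dots> = ennreal (4 powr \<beta>) * (\<integral>\<^sup>+t. (\<integral>\<^sup>+v. (if 0 < t \<and> t < \<bar>\<Psi> v\<bar> then ennreal (?g t) else 0) \<partial>\<pi>) \<partial>lborel)"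
    by (subst nn_integral_cmult) (measurable, simp add: Fubini')
  also have "\<dots> \<le> ennreal (4 powr \<beta>) * ennreal (K * s powr \<alpha> * (1 / (2 * \<beta> - \<alpha>) + 1 / (\<alpha> - \<beta>)))"
    using assms inner by (intro mult_left_mono order_trans[OF nn_integral_mono nn_integral_min_powr_div_tail_le]) auto
  also have "\<dots> = ennreal (4 powr \<beta> * (K * s powr \<alpha> * (1 / (2 * \<beta> - \<alpha>) + 1 / (\<alpha> - \<beta>))))"
    using assms by (simp add: ennreal_mult)
  finally show ?thesis .
qed

lemma abs_powr_le_powr_mult_1_plus:
  fixes q \<alpha> \<beta> :: real
  assumes "\<beta> \<le> \<alpha>" "\<alpha> \<le> \<beta> + 1"
  shows "\<bar>q\<bar> powr \<alpha> \<le> \<bar>q\<bar> powr \<beta> * (1 + \<bar>q\<bar>)"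
proof (cases "\<bar>q\<bar> \<le> 1")
  case True
  then have "\<bar>q\<bar> powr \<alpha> \<le> \<bar>q\<bar> powr \<beta>"
    using assms by (cases "q = 0") (auto intro: powr_mono')
  also have "\<dots> \<le> \<bar>q\<bar> powr \<beta> * (1 + \<bar>q\<bar>)"
    by (simp add: mult_le_cancel_left1)
  finally show ?thesis .
next
  case False
  then have "\<bar>q\<bar> powr \<alpha> \<le> \<bar>q\<bar> powr (\<beta> + 1)"
    using assms by (intro powr_mono) auto
  also have "\<dots> = \<bar>q\<bar> powr \<beta> * \<bar>q\<bar>"
    using False by (simp add: powr_add)
  also have "\<dots> \<le> \<bar>q\<bar> powr \<beta> * (1 + \<bar>q\<bar>)"
    by (intro mult_left_mono) auto
  finally show ?thesis .
qed

lemma SUP_norm_hfun_shift_powr_le: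
  fixes \<Delta> :: "real set" and a \<beta> D y :: real
  assumes "0 \<le> \<beta>" "0 < a" "0 \<le> D" and D: "\<And>l. l \<in> \<Delta> \<Longrightarrow> \<bar>l\<bar> \<le> D"
  shows "(SUP l\<in>\<Delta>. ennreal (cmod (hfun q ((y + l) / a)) powr \<beta>))
    \<le> ennreal (8 powr \<beta> * (min_powr \<beta> (\<bar>q\<bar> / a * \<bar>y\<bar>) + min_powr \<beta> (\<bar>q\<bar> / a * D)))"
proof (rule SUP_least)
  fix l assume "l \<in> \<Delta>"
  have "\<bar>q * ((y + l) / a)\<bar> = \<bar>q\<bar> / a * \<bar>y + l\<bar>"
    using assms by (simp add: abs_mult)
  also have "\<dots> \<le> \<bar>q\<bar> / a * (\<bar>y\<bar> + D)"
    using D[OF \<open>l \<in> \<Delta>\<close>] assms abs_triangle_ineq[of y l] by (intro mult_left_mono) auto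
  also have "\<dots> = \<bar>q\<bar> / a * \<bar>y\<bar> + \<bar>q\<bar> / a * D"
    by (rule distrib_left)
  finally have "min_powr \<beta> \<bar>q * ((y + l) / a)\<bar> \<le> 4 powr \<beta> * (min_powr \<beta> (\<bar>q\<bar> / a * \<bar>y\<bar>) + min_powr \<beta> (\<bar>q\<bar> / a * D))"
    using assms by (intro order_trans[OF min_powr_mono min_powr_add]) auto
  then have "cmod (hfun q ((y + l) / a)) powr \<beta>
      \<le> 2 powr \<beta> * (4 powr \<beta> * (min_powr \<beta> (\<bar>q\<bar> / a * \<bar>y\<bar>) + min_powr \<beta> (\<bar>q\<bar> / a * D)))"
    using assms by (intro order_trans[OF norm_hfun_powr_le_min_powr] mult_left_mono) auto
  also have "\<dots> = 8 powr \<beta> * (min_powr \<beta> (\<bar>q\<bar> / a * \<bar>y\<bar>) + min_powr \<beta> (\<bar>q\<bar> / a * D))"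
    by (simp add: powr_mult[symmetric])
  finally show "ennreal (cmod (hfun q ((y + l) / a)) powr \<beta>)
      \<le> ennreal (8 powr \<beta> * (min_powr \<beta> (\<bar>q\<bar> / a * \<bar>y\<bar>) + min_powr \<beta> (\<bar>q\<bar> / a * D)))"
    by (rule ennreal_leI)
qed

lemma nn_integral_SUP_norm_hfun_shift_powr_le_powr:
  fixes \<pi> :: "'a measure" and \<Psi> :: "'a \<Rightarrow> real" and \<Delta> :: "real set" and \<alpha> \<beta> K a D q :: real
  assumes "prob_space \<pi>" and [measurable]: "\<Psi> \<in> borel_measurable \<pi>"
    and "1 \<le> \<beta>" "\<beta> < \<alpha>" "\<alpha> < 2 * \<beta>" "0 \<le> K"
    and tail: "\<And>t. 0 < t \<Longrightarrow> measure \<pi> {v \<in> space \<pi>. t < \<bar>\<Psi> v\<bar>} \<le> K * t powr (-\<alpha>)"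
    and "0 < a" "0 < D" and D: "\<And>l. l \<in> \<Delta> \<Longrightarrow> \<bar>l\<bar> \<le> D"
  shows "(\<integral>\<^sup>+ v. (SUP l\<in>\<Delta>. ennreal (cmod (hfun q ((\<Psi> v + l) / a)) powr \<beta>)) \<partial>\<pi>)
    \<le> ennreal (8 powr \<beta> * (4 powr \<beta> * K * (1 / (2 * \<beta> - \<alpha>) + 1 / (\<alpha> - \<beta>)) + D powr \<alpha>) * (\<bar>q\<bar> / a) powr \<alpha>)"
proof -
  interpret prob_space \<pi> by fact
  define s where "s = \<bar>q\<bar> / a"
  have "0 \<le> s"
    using \<open>0 < a\<close> by (simp add: s_def)
  have "(\<integral>\<^sup>+ v. (SUP l\<in>\<Delta>. ennreal (cmod (hfun q ((\<Psi> v + l) / a)) powr \<beta>)) \<partial>\<pi>)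
      \<le> (\<integral>\<^sup>+ v. ennreal (8 powr \<beta>) * (ennreal (min_powr \<beta> (s * \<bar>\<Psi> v\<bar>)) + ennreal (min_powr \<beta> (s * D))) \<partial>\<pi>)"
    using SUP_norm_hfun_shift_powr_le[OF _ \<open>0 < a\<close> _ D] assms
    by (intro nn_integral_mono) (simp add: s_def ennreal_mult ennreal_plus min_powr_nonneg)
  also have "\<dots> = ennreal (8 powr \<beta>) * ((\<integral>\<^sup>+ v. ennreal (min_powr \<beta> (s * \<bar>\<Psi> v\<bar>)) \<partial>\<pi>) + ennreal (min_powr \<beta> (s * D)))"
    by (simp add: nn_integral_cmult nn_integral_add emeasure_space_1 min_powr_def)
  also have "\<dots> \<le> ennreal (8 powr \<beta>) * (ennreal (4 powr \<beta> * (K * s powr \<alpha> * (1 / (2 * \<beta> - \<alpha>) + 1 / (\<alpha> - \<beta>))))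
      + ennreal ((s * D) powr \<alpha>))"
  proof (cases "s = 0")
    case False
    then show ?thesis
      using assms \<open>0 \<le> s\<close> by (intro mult_left_mono add_mono nn_integral_min_powr_le ennreal_leI min_powr_le_powr) auto
  qed (simp add: min_powr_def)
  also have "\<dots> = ennreal (8 powr \<beta> * (4 powr \<beta> * K * (1 / (2 * \<beta> - \<alpha>) + 1 / (\<alpha> - \<beta>)) + D powr \<alpha>) * s powr \<alpha>)"
    using assms \<open>0 \<le> s\<close>
    by (simp add: ennreal_mult[symmetric] ennreal_plus[symmetric] powr_mult algebra_simps del: ennreal_plus)
  finally show ?thesis
    by (simp add: s_def)
qed

lemma nn_integral_SUP_norm_hfun_shift_powr_le:
  fixes \<pi> :: "'a measure" and \<Psi> :: "'a \<Rightarrow> real" and \<Delta> :: "real set" and \<alpha> \<beta> K :: real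
  assumes "prob_space \<pi>" and [measurable]: "\<Psi> \<in> borel_measurable \<pi>"
    and "1 < \<alpha>" "\<alpha> < 2" "0 \<le> K"
    and tail: "\<And>t. 0 < t \<Longrightarrow> measure \<pi> {v \<in> space \<pi>. t < \<bar>\<Psi> v\<bar>} \<le> K * t powr (-\<alpha>)"
    and "bounded \<Delta>" "1 \<le> \<beta>" "\<beta> < \<alpha>"
  shows "\<exists>C>0. \<forall>q::real. \<forall>N::nat. N \<ge> 1 \<longrightarrow>
    ennreal (real N) * (\<integral>\<^sup>+ v. (SUP l\<in>\<Delta>. ennreal (cmod (hfun q ((\<Psi> v + l) / real N powr (1/\<alpha>))) powr \<beta>)) \<partial>\<pi>)
      \<le> ennreal (C * \<bar>q\<bar> powr \<beta> * (1 + \<bar>q\<bar>))"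
proof -
  obtain D0 where D0: "\<forall>l\<in>\<Delta>. norm l \<le> D0"
    using \<open>bounded \<Delta>\<close> unfolding bounded_iff by blast
  define D where "D = max D0 1"
  have "0 < D" and D: "\<And>l. l \<in> \<Delta> \<Longrightarrow> \<bar>l\<bar> \<le> D"
    using D0 unfolding D_def by force+
  define c where "c = 8 powr \<beta> * (4 powr \<beta> * K * (1 / (2 * \<beta> - \<alpha>) + 1 / (\<alpha> - \<beta>)) + D powr \<alpha>)"
  have "0 \<le> c"
    unfolding c_def using assms by (intro mult_nonneg_nonneg add_nonneg_nonneg) auto
  show ?thesis
  proof (intro exI[of _ "c + 1"] conjI allI impI)
    fix q :: real and N :: nat
    assume "1 \<le> N"
    define a where "a = real N powr (1/\<alpha>)"
    have "0 < a"
      using \<open>1 \<le> N\<close> by (simp add: a_def)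
    have "(\<bar>q\<bar> / a) powr \<alpha> = \<bar>q\<bar> powr \<alpha> / real N"
      using \<open>0 < a\<close> assms by (simp add: powr_divide a_def powr_powr)
    then have "real N * (c * (\<bar>q\<bar> / a) powr \<alpha>) = c * \<bar>q\<bar> powr \<alpha>"
      using \<open>1 \<le> N\<close> by simp
    also have "\<dots> \<le> c * (\<bar>q\<bar> powr \<beta> * (1 + \<bar>q\<bar>))"
      using assms \<open>0 \<le> c\<close> by (intro mult_left_mono abs_powr_le_powr_mult_1_plus) auto
    also have "\<dots> \<le> (c + 1) * \<bar>q\<bar> powr \<beta> * (1 + \<bar>q\<bar>)"
      by (simp add: distrib_right)
    finally have bound: "real N * (c * (\<bar>q\<bar> / a) powr \<alpha>) \<le> (c + 1) * \<bar>q\<bar> powr \<beta> * (1 + \<bar>q\<bar>)" .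
    have "ennreal (real N) * (\<integral>\<^sup>+ v. (SUP l\<in>\<Delta>. ennreal (cmod (hfun q ((\<Psi> v + l) / a)) powr \<beta>)) \<partial>\<pi>)
        \<le> ennreal (real N) * ennreal (c * (\<bar>q\<bar> / a) powr \<alpha>)"
      unfolding c_def using assms \<open>0 < a\<close> \<open>0 < D\<close> D
      by (intro mult_left_mono nn_integral_SUP_norm_hfun_shift_powr_le_powr) auto
    also have "\<dots> \<le> ennreal ((c + 1) * \<bar>q\<bar> powr \<beta> * (1 + \<bar>q\<bar>))"
      using bound \<open>0 \<le> c\<close> by (simp add: ennreal_mult[symmetric] ennreal_leI del: ennreal_mult')
    finally show "ennreal (real N) * (\<integral>\<^sup>+ v. (SUP l\<in>\<Delta>. ennreal (cmod (hfun q ((\<Psi> v + l) / real N powr (1/\<alpha>))) powr \<beta>)) \<partial>\<pi>)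
      \<le> ennreal ((c + 1) * \<bar>q\<bar> powr \<beta> * (1 + \<bar>q\<bar>))"
      by (simp add: a_def)
  qed (use \<open>0 \<le> c\<close> in \<open>simp add: add_nonneg_pos\<close>)
qed

theorem lemma5p3:
  fixes \<pi> :: "'a::polish_space measure" and p :: "'a \<Rightarrow> 'a \<Rightarrow> real"
    and M :: "'b measure" and \<xi> :: "nat \<Rightarrow> 'b \<Rightarrow> 'a"
    and \<Psi> chi :: "'a \<Rightarrow> real"
    and \<alpha> \<alpha>\<^sub>1 cp cm C\<^sub>s :: real
  assumes pi_prob: "prob_space \<pi>" and pi_borel: "sets \<pi> = sets borel"
    and kernel: "density_kernel \<pi> p"
    and chain: "markov_chain M \<xi> \<pi> p"
    and invariant: "invariant_measure \<pi> p"
    and ergodic: "ergodic_measure \<pi> p"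
    and gap: "spectral_gap \<pi> p"
    and Psi_meas: "\<Psi> \<in> borel_measurable \<pi>"
    and Psi_int: "integrable \<pi> \<Psi>"
    and Psi_mean: "(\<integral>v. \<Psi> v \<partial>\<pi>) = 0"
    and alpha: "1 < \<alpha>" "\<alpha> < 2"
    and alpha1: "0 < \<alpha>\<^sub>1" "\<alpha>\<^sub>1 < 2 - \<alpha>"
    and cpm: "0 \<le> cp" "0 \<le> cm" "0 < cp + cm"
    and Cs: "0 < C\<^sub>s"
    and tails: "\<And>l. l \<ge> 1 \<Longrightarrow>
        \<bar>measure \<pi> {v \<in> space \<pi>. \<Psi> v > l} - cp * l powr (-\<alpha>)\<bar>
        + \<bar>measure \<pi> {v \<in> space \<pi>. \<Psi> v < - l} - cm * l powr (-\<alpha>)\<bar>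
        \<le> C\<^sub>s * l powr (-\<alpha> - \<alpha>\<^sub>1)"
    and chi_meas: "chi \<in> borel_measurable \<pi>"
    and chi_Lbeta: "\<And>\<beta>. 1 \<le> \<beta> \<Longrightarrow> \<beta> < \<alpha> \<Longrightarrow> integrable \<pi> (\<lambda>v. \<bar>chi v\<bar> powr \<beta>)"
    and chi_mean: "(\<integral>v. chi v \<partial>\<pi>) = 0"
    and chi_eq: "AE w in \<pi>. chi w - trans_op \<pi> p chi w = \<Psi> w"
  shows "(\<exists>C>0. \<forall>q::real. \<forall>N::nat. N \<ge> 1 \<longrightarrow>
            cmod (- of_nat N *
                    (\<integral>\<omega>. hfun q (real N powr (-1/\<alpha>) * (chi (\<xi> 1 \<omega>) - trans_op \<pi> p chi (\<xi> 0 \<omega>))) \<partial>M)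
                  - psi_exp \<alpha> cp cm q)
            \<le> C / real N powr (\<alpha>\<^sub>1 / \<alpha>) * \<bar>q\<bar> * (1 + \<bar>q\<bar>))
       \<and> (\<forall>\<Delta>::real set. \<forall>\<beta>. bounded \<Delta> \<longrightarrow> 1 \<le> \<beta> \<longrightarrow> \<beta> < \<alpha> \<longrightarrow>
            (\<exists>C>0. \<forall>q::real. \<forall>N::nat. N \<ge> 1 \<longrightarrow>
              ennreal (real N) * (\<integral>\<^sup>+ v. (SUP l\<in>\<Delta>.
                   ennreal (cmod (hfun q ((\<Psi> v + l) / real N powr (1/\<alpha>))) powr \<beta>)) \<partial>\<pi>)
              \<le> ennreal (C * \<bar>q\<bar> powr \<beta> * (1 + \<bar>q\<bar>))))"
proof -
  \<comment> \<open>Ergodicity, the spectral gap and the centring conditions only serve to construct \<open>chi\<close>;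
    once \<open>chi - P chi = \<Psi>\<close> is given, integrability of \<open>chi\<close> is all that is needed.\<close>
  have "integrable \<pi> chi"
    using chi_Lbeta[of 1] alpha chi_meas by (simp add: integrable_abs_iff)
  have tail_bound: "measure \<pi> {v \<in> space \<pi>. t < \<bar>\<Psi> v\<bar>} \<le> (1 + cp + cm + C\<^sub>s) * t powr (-\<alpha>)"
    if "0 < t" for t
    using measure_abs_greater_le_powr[OF pi_prob Psi_meas _ _ cpm(1,2) _ tails that] alpha alpha1 Cs by simp
  have "0 \<le> 1 + cp + cm + C\<^sub>s"
    using cpm Cs by simp
  show ?thesis
    using markov_chain_increment_psi_error[OF pi_prob kernel chain invariant Psi_meas Psi_int alpha alpha1
        cpm(1,2) less_imp_le[OF Cs] tails chi_meas \<open>integrable \<pi> chi\<close> chi_eq]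
      nn_integral_SUP_norm_hfun_shift_powr_le[OF pi_prob Psi_meas alpha \<open>0 \<le> 1 + cp + cm + C\<^sub>s\<close> tail_bound]
    by blast
qed

end
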